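(* Let $C,D,E$ be finite category presentations. If $\mathcal P:[\![C]\!]\nrightarrow[\![D]\!]$ and $\mathcal Q:[\![D]\!]\nrightarrow[\![E]\!]$ are profunctors with $\mathcal P\cong[\![P]\!]$ and $\mathcal Q\cong[\![Q]\!]$ for finite curryable profunctor presentations $P:C\nrightarrow D$ and $Q:D\nrightarrow E$, then there is a finite curryable profunctor presentation $R:C\nrightarrow E$ with $\mathcal P\odot\mathcal Q\cong[\![R]\!]$.
   Context: Category presentations $C$: sorts, function symbols $f:c\to c'$, equations $C_E$ between parallel paths (composable lists of function symbols, possibly empty); finite if all these sets are finite. Provable equality $\approx_C$: smallest equivalence relation on paths containing $C_E$ and closed under concatenation with composable function symbols; $[\![C]\!]$: sorts as objects, $\approx_C$-classes of paths as morphisms. Profunctors $\mathcal P:\mathcal C\nrightarrow\mathcal D$: functors $\mathcal C^{op}\times\mathcal D\to\mathbf{Set}$ (equivalently categories over $\mathbf 2=\{0\to1\}$ with fibres $\mathcal C,\mathcal D$); isomorphisms are natural isomorphisms. Composite: $(\mathcal P\odot\mathcal Q)(c,e)=\int^{d}\mathcal P(c,d)\times\mathcal Q(d,e)$, the quotient of $\coprod_d\mathcal P(c,d)\times\mathcal Q(d,e)$ by the equivalence relation generated by $(p,\mathcal Q(g,1)q')\sim(\mathcal P(1,g)p,q')$ for $g:d\to d'$. Uncurried presentations $P:C\nrightarrow D$: a set $\mathrm{Fun}(P)$ of symbols $x:c\to d$ ($c$ a $C$-sort, $d$ a $D$-sort) and a set $P_E$ of equations between cross-paths (paths from a $C$-sort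 to a $D$-sort) of the category presentation $|P|$ with sorts $\mathrm{Sort}(C)+\mathrm{Sort}(D)$, symbols $\mathrm{Fun}(C)+\mathrm{Fun}(P)+\mathrm{Fun}(D)$ and equations $C_E+P_E+D_E$; $\approx_P$ is provable equality of $|P|$ restricted to cross-paths; $[\![P]\!]=[\![|P|]\!]$ with $C$-sorts over $0$ and $D$-sorts over $1$. Finite if $\mathrm{Fun}(P)$ and $P_E$ are finite. A short left cross-path is $f.p$ with $f\in\mathrm{Fun}(C)$, $p\in\mathrm{Fun}(P)$; a right cross-path is $p.g$ with $p\in\mathrm{Fun}(P)$, $g$ a $D$-path. For a $C$-sort $c$, $P^c$ is the $D$-instance presentation whose generators are the symbols $p:c\to d$ of $P$ and whose equations are those of $P_E$ with source $c$ (its provable equality being the smallest equivalence relation on its terms $p.g$ containing these equations, closed under right concatenation with $D$-function symbols, and identifying $t.g,t.g'$ for equations $g=g'$ of $D_E$). $P$ is nongenerative if every short left cross-path is $\approx_P$-equal to a right cross-path, conservative if right cross-paths $t,t'$ from $c$ with $t\approx_P t'$ are provably equal in $P^c$, and curryable if it is both nongenerative and conservative. *)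

theory Defs
  imports Main
begin

type_synonym ('s,'f) path = "'s \<times> 'f list"
  \<comment> \<open>a path is its source sort together with a list of function symbols,
      composed in diagrammatic order (f.g = first f, then g)\<close>

record ('s,'f) catpres =
  Sorts :: "'s set"
  Funs :: "'f set"
  fsrc :: "'f \<Rightarrow> 's"
  ftgt :: "'f \<Rightarrow> 's"
  Eqs :: "(('s,'f) path \<times> ('s,'f) path) set"

fun is_chain :: "('s,'f,'z) catpres_scheme \<Rightarrow> 's \<Rightarrow> 'f list \<Rightarrow> 's \<Rightarrow> bool" where
  "is_chain C s [] t = (s = t \<and> s \<in> Sorts C)"
| "is_chain C s (f # fs) t =
     (s \<in> Sorts C \<and> f \<in> Funs C \<and> fsrc C f = s \<and> is_chain C (ftgt C f) fs t)"

definition is_path :: "('s,'f,'z) catpres_scheme \<Rightarrow> ('s,'f) path \<Rightarrow> 's \<Rightarrow> bool" where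
  "is_path C p t \<longleftrightarrow> is_chain C (fst p) (snd p) t"

definition path_tgt :: "('s,'f,'z) catpres_scheme \<Rightarrow> ('s,'f) path \<Rightarrow> 's" where
  "path_tgt C p = (if snd p = [] then fst p else ftgt C (last (snd p)))"

definition catpres_wf :: "('s,'f) catpres \<Rightarrow> bool" where
  "catpres_wf C \<longleftrightarrow>
     (\<forall>f\<in>Funs C. fsrc C f \<in> Sorts C \<and> ftgt C f \<in> Sorts C) \<and>
     (\<forall>(u,v)\<in>Eqs C. fst u = fst v \<and> (\<exists>t. is_path C u t \<and> is_path C v t))"

definition finite_catpres :: "('s,'f) catpres \<Rightarrow> bool" where
  "finite_catpres C \<longleftrightarrow> finite (Sorts C) \<and> finite (Funs C) \<and> finite (Eqs C)"

inductive prov_eq :: "('s,'f) catpres \<Rightarrow> ('s,'f) path \<Rightarrow> ('s,'f) path \<Rightarrow> bool"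
  for C :: "('s,'f) catpres" where
  ax: "(u,v) \<in> Eqs C \<Longrightarrow> prov_eq C u v"
| refl: "is_path C u t \<Longrightarrow> prov_eq C u u"
| sym: "prov_eq C u v \<Longrightarrow> prov_eq C v u"
| trans: "prov_eq C u v \<Longrightarrow> prov_eq C v w \<Longrightarrow> prov_eq C u w"
| post: "prov_eq C (s,u) (s',v) \<Longrightarrow> is_path C (s,u) t \<Longrightarrow> f \<in> Funs C \<Longrightarrow> fsrc C f = t
         \<Longrightarrow> prov_eq C (s, u @ [f]) (s', v @ [f])"
| pre: "prov_eq C (s,u) (s',v) \<Longrightarrow> g \<in> Funs C \<Longrightarrow> ftgt C g = s
         \<Longrightarrow> prov_eq C (fsrc C g, g # u) (fsrc C g, g # v)"

text \<open>Morphisms of [[C]] are provable-equality classes of paths, so a functor out of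
  [[C]]^op x [[D]] is given by an action of pairs of paths respecting provable equality.
  act P u v : P(c,d) -> P(c',d') for u : c' -> c in C and v : d -> d' in D.\<close>

record ('sc,'fc,'sd,'fd,'e) profunctor =
  el :: "'sc \<Rightarrow> 'sd \<Rightarrow> 'e set"
  act :: "('sc,'fc) path \<Rightarrow> ('sd,'fd) path \<Rightarrow> 'e \<Rightarrow> 'e"

definition is_profunctor ::
  "('sc,'fc) catpres \<Rightarrow> ('sd,'fd) catpres \<Rightarrow> ('sc,'fc,'sd,'fd,'e) profunctor \<Rightarrow> bool" where
  "is_profunctor C D P \<longleftrightarrow>
     (\<forall>c d. el P c d \<noteq> {} \<longrightarrow> c \<in> Sorts C \<and> d \<in> Sorts D) \<and>
     (\<forall>u v c d' x. is_path C u c \<and> is_path D v d' \<and> x \<in> el P c (fst v)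
         \<longrightarrow> act P u v x \<in> el P (fst u) d') \<and>
     (\<forall>c d x. x \<in> el P c d \<longrightarrow> act P (c,[]) (d,[]) x = x) \<and>
     (\<forall>c0 c1 c2 u1 u2 d0 d1 d2 v1 v2 x.
         is_chain C c2 u1 c1 \<and> is_chain C c1 u2 c0 \<and>
         is_chain D d0 v1 d1 \<and> is_chain D d1 v2 d2 \<and> x \<in> el P c0 d0
         \<longrightarrow> act P (c2, u1 @ u2) (d0, v1 @ v2) x
             = act P (c2, u1) (d1, v2) (act P (c1, u2) (d0, v1) x)) \<and>
     (\<forall>u u' v v' c d' x. prov_eq C u u' \<and> is_path C u c \<and> prov_eq D v v' \<and> is_path D v d'
         \<and> x \<in> el P c (fst v) \<longrightarrow> act P u v x = act P u' v' x)"

definition prof_iso ::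
  "('sc,'fc) catpres \<Rightarrow> ('sd,'fd) catpres \<Rightarrow> ('sc,'fc,'sd,'fd,'a) profunctor
     \<Rightarrow> ('sc,'fc,'sd,'fd,'b) profunctor \<Rightarrow> bool" where
  "prof_iso C D P Q \<longleftrightarrow> (\<exists>\<phi>.
     (\<forall>c\<in>Sorts C. \<forall>d\<in>Sorts D. bij_betw (\<phi> c d) (el P c d) (el Q c d)) \<and>
     (\<forall>u v c d' x. is_path C u c \<and> is_path D v d' \<and> x \<in> el P c (fst v)
        \<longrightarrow> \<phi> (fst u) d' (act P u v x) = act Q u v (\<phi> c (fst v) x)))"

definition comp_carrier where
  "comp_carrier D P Q c e = {(d,p,q). d \<in> Sorts D \<and> p \<in> el P c d \<and> q \<in> el Q d e}"

definition comp_gen ::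
  "('sd,'fd) catpres \<Rightarrow> ('sc,'fc,'sd,'fd,'a) profunctor \<Rightarrow> ('sd,'fd,'se,'fe,'b) profunctor
     \<Rightarrow> 'sc \<Rightarrow> 'se \<Rightarrow> (('sd \<times> 'a \<times> 'b) \<times> ('sd \<times> 'a \<times> 'b)) set" where
  "comp_gen D P Q c e =
     {((d, p, act Q (d,g) (e,[]) q'), (d', act P (c,[]) (d,g) p, q')) | d d' g p q'.
        is_chain D d g d' \<and> p \<in> el P c d \<and> q' \<in> el Q d' e}"

definition comp_rel where
  "comp_rel D P Q c e =
     (Id_on (comp_carrier D P Q c e) \<union> comp_gen D P Q c e \<union> (comp_gen D P Q c e)\<inverse>)\<^sup>*"

definition prof_comp ::
  "('sc,'fc) catpres \<Rightarrow> ('sd,'fd) catpres \<Rightarrow> ('se,'fe) catpres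
     \<Rightarrow> ('sc,'fc,'sd,'fd,'a) profunctor \<Rightarrow> ('sd,'fd,'se,'fe,'b) profunctor
     \<Rightarrow> ('sc,'fc,'se,'fe,('sd \<times> 'a \<times> 'b) set) profunctor" where
  "prof_comp C D E P Q =
     \<lparr> el = (\<lambda>c e. comp_carrier D P Q c e // comp_rel D P Q c e),
       act = (\<lambda>u w X. \<Union>x\<in>X. comp_rel D P Q (fst u) (path_tgt E w) ``
                {(fst x, act P u (fst x, []) (fst (snd x)), act Q (fst x, []) w (snd (snd x)))}) \<rparr>"

record ('sc,'fc,'sd,'fd,'f) profpres =
  PFuns :: "'f set"
  psrc :: "'f \<Rightarrow> 'sc"
  ptgt :: "'f \<Rightarrow> 'sd"
  PEqs :: "((('sc + 'sd), ('fc + 'f + 'fd)) path \<times> (('sc + 'sd), ('fc + 'f + 'fd)) path) set"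

definition emb_l :: "('sc,'fc) path \<Rightarrow> ('sc + 'sd, 'fc + 'f + 'fd) path" where
  "emb_l u = (Inl (fst u), map Inl (snd u))"

definition emb_r :: "('sd,'fd) path \<Rightarrow> ('sc + 'sd, 'fc + 'f + 'fd) path" where
  "emb_r v = (Inr (fst v), map (Inr \<circ> Inr) (snd v))"

definition total ::
  "('sc,'fc) catpres \<Rightarrow> ('sd,'fd) catpres \<Rightarrow> ('sc,'fc,'sd,'fd,'f) profpres
     \<Rightarrow> ('sc + 'sd, 'fc + 'f + 'fd) catpres" where
  "total C D P =
     \<lparr> Sorts = Inl ` Sorts C \<union> Inr ` Sorts D,
       Funs = Inl ` Funs C \<union> (Inr \<circ> Inl) ` PFuns P \<union> (Inr \<circ> Inr) ` Funs D,
       fsrc = case_sum (Inl \<circ> fsrc C) (case_sum (Inl \<circ> psrc P) (Inr \<circ> fsrc D)),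
       ftgt = case_sum (Inl \<circ> ftgt C) (case_sum (Inr \<circ> ptgt P) (Inr \<circ> ftgt D)),
       Eqs = (\<lambda>(u,v). (emb_l u, emb_l v)) ` Eqs C \<union> PEqs P \<union> (\<lambda>(u,v). (emb_r u, emb_r v)) ` Eqs D \<rparr>"

definition cross_path where
  "cross_path C D P c d t \<longleftrightarrow> fst t = Inl c \<and> is_path (total C D P) t (Inr d)"

definition profpres_wf ::
  "('sc,'fc) catpres \<Rightarrow> ('sd,'fd) catpres \<Rightarrow> ('sc,'fc,'sd,'fd,'f) profpres \<Rightarrow> bool" where
  "profpres_wf C D P \<longleftrightarrow>
     (\<forall>p\<in>PFuns P. psrc P p \<in> Sorts C \<and> ptgt P p \<in> Sorts D) \<and>
     (\<forall>(u,v)\<in>PEqs P. \<exists>c d. cross_path C D P c d u \<and> cross_path C D P c d v)"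

definition finite_profpres :: "('sc,'fc,'sd,'fd,'f) profpres \<Rightarrow> bool" where
  "finite_profpres P \<longleftrightarrow> finite (PFuns P) \<and> finite (PEqs P)"

definition pres_prof ::
  "('sc,'fc) catpres \<Rightarrow> ('sd,'fd) catpres \<Rightarrow> ('sc,'fc,'sd,'fd,'f) profpres
     \<Rightarrow> ('sc,'fc,'sd,'fd,('sc + 'sd, 'fc + 'f + 'fd) path set) profunctor" where
  "pres_prof C D P =
     \<lparr> el = (\<lambda>c d. {t. cross_path C D P c d t} // {(x,y). prov_eq (total C D P) x y}),
       act = (\<lambda>u v X. \<Union>t\<in>X. {t'. prov_eq (total C D P)
                 (Inl (fst u), snd (emb_l u :: ('sc + 'sd, 'fc + 'f + 'fd) path) @ snd t
                     @ snd (emb_r v :: ('sc + 'sd, 'fc + 'f + 'fd) path)) t'}) \<rparr>"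

definition rcp where
  "rcp C D P c t \<longleftrightarrow> (\<exists>p g d. t = (Inl c, Inr (Inl p) # map (Inr \<circ> Inr) g) \<and>
       p \<in> PFuns P \<and> psrc P p = c \<and> is_chain D (ptgt P p) g d)"

inductive inst_eq for C :: "('sc,'fc) catpres" and D :: "('sd,'fd) catpres"
    and P :: "('sc,'fc,'sd,'fd,'f) profpres" and c :: 'sc where
  ax: "(t,t') \<in> PEqs P \<Longrightarrow> rcp C D P c t \<Longrightarrow> rcp C D P c t' \<Longrightarrow> inst_eq C D P c t t'"
| refl: "rcp C D P c t \<Longrightarrow> inst_eq C D P c t t"
| sym: "inst_eq C D P c t t' \<Longrightarrow> inst_eq C D P c t' t"
| trans: "inst_eq C D P c t t' \<Longrightarrow> inst_eq C D P c t' t'' \<Longrightarrow> inst_eq C D P c t t''"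
| app: "inst_eq C D P c t t' \<Longrightarrow> is_path (total C D P) t (Inr d) \<Longrightarrow> g \<in> Funs D \<Longrightarrow> fsrc D g = d
        \<Longrightarrow> inst_eq C D P c (fst t, snd t @ [Inr (Inr g)]) (fst t', snd t' @ [Inr (Inr g)])"
| deq: "rcp C D P c t \<Longrightarrow> is_path (total C D P) t (Inr d) \<Longrightarrow> (u,v) \<in> Eqs D \<Longrightarrow> fst u = d
        \<Longrightarrow> inst_eq C D P c (fst t, snd t @ map (Inr \<circ> Inr) (snd u))
                             (fst t, snd t @ map (Inr \<circ> Inr) (snd v))"

definition nongenerative where
  "nongenerative C D P \<longleftrightarrow>
     (\<forall>f\<in>Funs C. \<forall>p\<in>PFuns P. ftgt C f = psrc P p \<longrightarrow>
        (\<exists>t. rcp C D P (fsrc C f) t \<and>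
             prov_eq (total C D P) (Inl (fsrc C f), [Inl f, Inr (Inl p)]) t))"

definition conservative where
  "conservative C D P \<longleftrightarrow>
     (\<forall>c t t'. rcp C D P c t \<and> rcp C D P c t' \<and> prov_eq (total C D P) t t'
        \<longrightarrow> inst_eq C D P c t t')"

definition curryable where
  "curryable C D P \<longleftrightarrow> nongenerative C D P \<and> conservative C D P"

end

theory Submission
  imports Defs
begin

text \<open>The presentation R has one generator for every composable pair of a generator
  \<open>p : c \<rightarrow> d\<close> of P and a generator \<open>q : d \<rightarrow> e\<close> of Q. Its equations are the equations of P
  postcomposed with each q, the equations of Q precomposed with each p, and, for every
  C-symbol f, an equation turning \<open>f.(p,q)\<close> into a right cross-path: a right cross-path of P equal
  to \<open>f.p\<close>, whose D-tail is pushed into Q and normalised there. So R is nongenerative by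
  construction.

  A cross-path \<open>x.(p,q).h\<close> of R denotes the element \<open>[x.p] \<otimes> [q.h]\<close> of \<open>\<P> \<odot> \<Q>\<close>. This
  interpretation respects provable equality of |R|; conversely, by conservativity of P and Q,
  every generating relation \<open>(a, g.b) \<sim> (a.g, b)\<close> of the coend is derivable in the instance
  presentations of R. Hence two right cross-paths of R are equal in \<open>R\<^sup>c\<close> as soon as they have
  the same interpretation, which yields both conservativity of R and the isomorphism
  \<open>\<P> \<odot> \<Q> \<cong> [[R]]\<close>.\<close>

lemma chain_src: "is_chain X s xs t \<Longrightarrow> s \<in> Sorts X"
  by (cases xs) auto

lemma chain_tgt_sort: "is_chain X s xs t \<Longrightarrow> t \<in> Sorts X"
  by (induction xs arbitrary: s) auto

lemma chain_tgt_unique: "is_chain X s xs t \<Longrightarrow> is_chain X s xs t' \<Longrightarrow> t = t'"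
  by (induction xs arbitrary: s) auto

lemma chain_append: "is_chain X s (a @ b) t \<longleftrightarrow> (\<exists>m. is_chain X s a m \<and> is_chain X m b t)"
  by (induction a arbitrary: s) (auto dest: chain_src)

lemma chain_snoc: "is_chain X s (a @ [f]) t \<longleftrightarrow>
  (\<exists>m. is_chain X s a m \<and> f \<in> Funs X \<and> fsrc X f = m \<and> ftgt X f = t \<and> t \<in> Sorts X)"
  by (auto simp: chain_append dest: chain_tgt_sort)

lemma path_tgt_chain: "is_chain X s xs t \<Longrightarrow> path_tgt X (s, xs) = t"
proof (induction xs arbitrary: t rule: rev_induct)
  case Nil then show ?case by (simp add: path_tgt_def)
next
  case (snoc f xs) then show ?case by (auto simp: path_tgt_def chain_snoc)
qed

lemma sum3_cases [case_names left middle right]: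
  obtains x where "a = Inl x" | y where "a = Inr (Inl y)" | z where "a = Inr (Inr z)"
  by (metis sum.exhaust)

lemma prov_eq_paths:
  assumes "prov_eq X u v" "catpres_wf X"
  shows "fst u = fst v \<and> (\<exists>t. is_path X u t \<and> is_path X v t)"
  using assms
proof (induction rule: prov_eq.induct)
  case (ax u v) then show ?case by (auto simp: catpres_wf_def)
next
  case (refl u t) then show ?case by auto
next
  case (sym u v) then show ?case by auto
next
  case (trans u v w) then show ?case by (auto simp: is_path_def) (metis chain_tgt_unique)
next
  case (post s u s' v t f)
  then obtain t' where "is_path X (s,u) t'" "is_path X (s',v) t'" "s = s'" by auto
  with post have "t' = t" by (auto simp: is_path_def dest: chain_tgt_unique)
  with post \<open>is_path X (s',v) t'\<close> show ?case
    by (auto simp: is_path_def chain_snoc catpres_wf_def intro!: exI[of _ "ftgt X f"])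
next
  case (pre s u s' v g)
  then show ?case by (auto simp: is_path_def catpres_wf_def)
qed

lemma prov_eq_append:
  assumes "prov_eq X (s,u) (s,v)" "is_path X (s,u) t" "is_chain X t w t'"
  shows "prov_eq X (s, u @ w) (s, v @ w)"
  using assms(3)
proof (induction w arbitrary: t' rule: rev_induct)
  case Nil then show ?case using assms by simp
next
  case (snoc f w)
  then obtain m where m: "is_chain X t w m" "f \<in> Funs X" "fsrc X f = m" by (auto simp: chain_snoc)
  have "prov_eq X (s, u @ w) (s, v @ w)" using snoc.IH m(1) .
  moreover have "is_path X (s, u @ w) m" using assms(2) m(1)
    by (auto simp: is_path_def chain_append)
  ultimately show ?case using prov_eq.post m by fastforce
qed

lemma prov_eq_prepend:
  assumes "prov_eq X (s,u) (s,v)" "is_chain X s0 w s"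
  shows "prov_eq X (s0, w @ u) (s0, w @ v)"
  using assms(2)
proof (induction w arbitrary: s0)
  case Nil then show ?case using assms by simp
next
  case (Cons g w)
  then have "prov_eq X (ftgt X g, w @ u) (ftgt X g, w @ v)" by simp
  from prov_eq.pre[OF this] Cons.prems show ?case by auto
qed

lemma total_simps[simp]:
  "Sorts (total C D P) = Inl ` Sorts C \<union> Inr ` Sorts D"
  "Inl f \<in> Funs (total C D P) \<longleftrightarrow> f \<in> Funs C"
  "Inr (Inl p) \<in> Funs (total C D P) \<longleftrightarrow> p \<in> PFuns P"
  "Inr (Inr g) \<in> Funs (total C D P) \<longleftrightarrow> g \<in> Funs D"
  "fsrc (total C D P) (Inl f) = Inl (fsrc C f)"
  "fsrc (total C D P) (Inr (Inl p)) = Inl (psrc P p)"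
  "fsrc (total C D P) (Inr (Inr g)) = Inr (fsrc D g)"
  "ftgt (total C D P) (Inl f) = Inl (ftgt C f)"
  "ftgt (total C D P) (Inr (Inl p)) = Inr (ptgt P p)"
  "ftgt (total C D P) (Inr (Inr g)) = Inr (ftgt D g)"
  by (auto simp: total_def)

lemma chain_total_R:
  "is_chain (total C D P) (Inr d) xs t \<longleftrightarrow>
     (\<exists>g d'. t = Inr d' \<and> xs = map (Inr \<circ> Inr) g \<and> is_chain D d g d')"
proof (induction xs arbitrary: d)
  case (Cons a xs)
  then show ?case by (cases a rule: sum3_cases) (auto simp: Cons_eq_map_conv inj_map_eq_map inj_def)
qed auto

lemma chain_total_L:
  "is_chain (total C D P) (Inl c) xs (Inl c') \<longleftrightarrow> (\<exists>x. xs = map Inl x \<and> is_chain C c x c')"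
proof (induction xs arbitrary: c)
  case (Cons a xs)
  then show ?case
    by (cases a rule: sum3_cases) (auto simp: Cons_eq_map_conv chain_total_R inj_map_eq_map inj_def)
qed auto

lemma chain_total_X:
  "is_chain (total C D P) (Inl c) xs (Inr d) \<longleftrightarrow>
     (\<exists>x p g. xs = map Inl x @ Inr (Inl p) # map (Inr \<circ> Inr) g \<and> is_chain C c x (psrc P p)
        \<and> p \<in> PFuns P \<and> is_chain D (ptgt P p) g d)"
proof (induction xs arbitrary: c)
  case (Cons a xs)
  show ?case
  proof (cases a rule: sum3_cases)
    case (left f)
    show ?thesis
    proof
      assume "is_chain (total C D P) (Inl c) (a # xs) (Inr d)"
      then have f: "c \<in> Sorts C" "f \<in> Funs C" "fsrc C f = c"
        and "is_chain (total C D P) (Inl (ftgt C f)) xs (Inr d)" using left by auto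
      then obtain x p g where "xs = map Inl x @ Inr (Inl p) # map (Inr \<circ> Inr) g"
        "is_chain C (ftgt C f) x (psrc P p)" "p \<in> PFuns P" "is_chain D (ptgt P p) g d"
        using Cons.IH by blast
      then show "\<exists>x p g. a # xs = map Inl x @ Inr (Inl p) # map (Inr \<circ> Inr) g
          \<and> is_chain C c x (psrc P p) \<and> p \<in> PFuns P \<and> is_chain D (ptgt P p) g d"
        using left f by (intro exI[of _ "f # x"]) auto
    next
      assume "\<exists>x p g. a # xs = map Inl x @ Inr (Inl p) # map (Inr \<circ> Inr) g
          \<and> is_chain C c x (psrc P p) \<and> p \<in> PFuns P \<and> is_chain D (ptgt P p) g d"
      then obtain x p g where x: "a # xs = map Inl x @ Inr (Inl p) # map (Inr \<circ> Inr) g"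
        "is_chain C c x (psrc P p)" "p \<in> PFuns P" "is_chain D (ptgt P p) g d"
        by blast
      then obtain x' where "x = f # x'" using left by (cases x) auto
      then show "is_chain (total C D P) (Inl c) (a # xs) (Inr d)"
        using x left Cons.IH by (auto simp: o_def)
    qed
  next
    case (middle p)
    then show ?thesis
      by (auto simp: chain_total_R Cons_eq_append_conv o_def) (rule exI[of _ "[]"], auto)
  qed (auto simp: Cons_eq_append_conv)
qed auto

lemma chain_emb_l[simp]: "is_chain (total C D P) (Inl c) (map Inl x) (Inl c') \<longleftrightarrow> is_chain C c x c'"
  by (auto simp: chain_total_L inj_map_eq_map)

lemma chain_emb_r[simp]:
  "is_chain (total C D P) (Inr d) (map (Inr \<circ> Inr) g) (Inr d') \<longleftrightarrow> is_chain D d g d'"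
  using inj_map_eq_map[of "Inr \<circ> Inr" g] by (auto simp: chain_total_R inj_def)

lemma chain_total_map_Inl:
  "is_chain (total C D P) (Inl c) (map Inl x) t \<Longrightarrow> \<exists>c'. t = Inl c' \<and> is_chain C c x c'"
  by (induction x arbitrary: c) auto

lemma prov_eq_emb_l:
  "prov_eq C u v \<Longrightarrow> prov_eq (total C D P) (emb_l u) (emb_l v)"
proof (induction rule: prov_eq.induct)
  case (ax u v) then show ?case by (intro prov_eq.ax) (force simp: total_def)
next
  case (refl u t) then show ?case
    by (intro prov_eq.refl[of _ _ "Inl t"]) (auto simp: emb_l_def is_path_def)
next
  case (sym u v) then show ?case by (blast intro: prov_eq.sym)
next
  case (trans u v w) then show ?case by (blast intro: prov_eq.trans)
next
  case (post s u s' v t f)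
  then show ?case
    using prov_eq.post[of "total C D P" "Inl s" "map Inl u" "Inl s'" "map Inl v" "Inl t" "Inl f"]
    by (auto simp: emb_l_def is_path_def)
next
  case (pre s u s' v g)
  then show ?case
    using prov_eq.pre[of "total C D P" "Inl s" "map Inl u" "Inl s'" "map Inl v" "Inl g"]
    by (auto simp: emb_l_def)
qed

lemma prov_eq_emb_r:
  "prov_eq D u v \<Longrightarrow> prov_eq (total C D P) (emb_r u) (emb_r v)"
proof (induction rule: prov_eq.induct)
  case (ax u v) then show ?case by (intro prov_eq.ax) (force simp: total_def)
next
  case (refl u t) then show ?case
    by (intro prov_eq.refl[of _ _ "Inr t"]) (auto simp: emb_r_def is_path_def)
next
  case (sym u v) then show ?case by (blast intro: prov_eq.sym)
next
  case (trans u v w) then show ?case by (blast intro: prov_eq.trans)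
next
  case (post s u s' v t f)
  then show ?case
    using prov_eq.post[of "total C D P" "Inr s" "map (Inr \<circ> Inr) u" "Inr s'" "map (Inr \<circ> Inr) v"
      "Inr t" "Inr (Inr f)"]
    by (auto simp: emb_r_def is_path_def)
next
  case (pre s u s' v g)
  then show ?case
    using prov_eq.pre[of "total C D P" "Inr s" "map (Inr \<circ> Inr) u" "Inr s'" "map (Inr \<circ> Inr) v"
      "Inr (Inr g)"]
    by (auto simp: emb_r_def)
qed

lemma catpres_wf_total:
  assumes wfC: "catpres_wf C" and wfD: "catpres_wf D" and wfP: "profpres_wf C D P"
  shows "catpres_wf (total C D P)"
  unfolding catpres_wf_def
proof (intro conjI ballI)
  fix f assume "f \<in> Funs (total C D P)"
  then show "fsrc (total C D P) f \<in> Sorts (total C D P)"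
    and "ftgt (total C D P) f \<in> Sorts (total C D P)"
    using wfC wfD wfP by (auto simp: total_def catpres_wf_def profpres_wf_def)
next
  fix uv assume "uv \<in> Eqs (total C D P)"
  then consider u v where "uv = (emb_l u, emb_l v)" "(u,v) \<in> Eqs C" | "uv \<in> PEqs P"
    | u v where "uv = (emb_r u, emb_r v)" "(u,v) \<in> Eqs D"
    by (auto simp: total_def)
  then show "case uv of (u,v) \<Rightarrow>
      fst u = fst v \<and> (\<exists>t. is_path (total C D P) u t \<and> is_path (total C D P) v t)"
  proof cases
    case (1 u v)
    then obtain t where "fst u = fst v" "is_path C u t" "is_path C v t"
      using wfC by (fastforce simp: catpres_wf_def)
    with 1 show ?thesis by (auto simp: emb_l_def is_path_def intro!: exI[of _ "Inl t"])
  next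
    case 2 with wfP show ?thesis by (fastforce simp: profpres_wf_def cross_path_def)
  next
    case (3 u v)
    then obtain t where "fst u = fst v" "is_path D u t" "is_path D v t"
      using wfD by (fastforce simp: catpres_wf_def)
    with 3 show ?thesis by (auto simp: emb_r_def is_path_def intro!: exI[of _ "Inr t"])
  qed
qed

definition whisker ::
  "('sc,'fc) path \<Rightarrow> ('sc + 'sd, 'fc + 'f + 'fd) path \<Rightarrow> ('sd,'fd) path
     \<Rightarrow> ('sc + 'sd, 'fc + 'f + 'fd) path" where
  "whisker u s v = (Inl (fst u), map Inl (snd u) @ snd s @ map (Inr \<circ> Inr) (snd v))"

definition append_right :: "('s, 'x + 'y + 'z) path \<Rightarrow> 'z list \<Rightarrow> ('s, 'x + 'y + 'z) path" where
  "append_right t h = (fst t, snd t @ map (Inr \<circ> Inr) h)"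

definition rcp_sym :: "('s, 'a + 'b + 'c) path \<Rightarrow> 'b" where
  "rcp_sym r = projl (projr (hd (snd r)))"

definition rcp_tail :: "('s, 'a + 'b + 'c) path \<Rightarrow> 'c list" where
  "rcp_tail r = map (projr \<circ> projr) (tl (snd r))"

lemma rcp_decomp:
  "rcp C D P c r \<Longrightarrow> r = (Inl c, Inr (Inl (rcp_sym r)) # map (Inr \<circ> Inr) (rcp_tail r)) \<and>
     rcp_sym r \<in> PFuns P \<and> psrc P (rcp_sym r) = c \<and> (\<exists>d. is_chain D (ptgt P (rcp_sym r)) (rcp_tail r) d)"
  by (auto simp: rcp_def rcp_sym_def rcp_tail_def comp_def)

lemma rcpI: "p \<in> PFuns P \<Longrightarrow> psrc P p = c \<Longrightarrow> is_chain D (ptgt P p) g d \<Longrightarrow>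
   rcp C D P c (Inl c, Inr (Inl p) # map (Inr \<circ> Inr) g)"
  by (auto simp: rcp_def)

lemma rcp_sym_simp[simp]: "rcp_sym (s, Inr (Inl p) # xs) = p" by (simp add: rcp_sym_def)

lemma rcp_tail_simp[simp]: "rcp_tail (s, Inr (Inl p) # map (Inr \<circ> Inr) g) = g"
  by (simp add: rcp_tail_def comp_def)

definition split_cross :: "('x + 'y + 'z) list \<Rightarrow> 'x list \<times> 'y \<times> 'z list" where
  "split_cross xs = (map projl (takeWhile isl xs), projl (projr (hd (dropWhile isl xs))),
             map (projr \<circ> projr) (tl (dropWhile isl xs)))"

lemma split_cross_simp[simp]: "split_cross (map Inl x @ Inr (Inl i) # map (Inr \<circ> Inr) h) = (x, i, h)"
  by (induction x) (auto simp: split_cross_def o_def)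

lemma profunctor_el_sorts: "is_profunctor C D X \<Longrightarrow> x \<in> el X c d \<Longrightarrow> c \<in> Sorts C \<and> d \<in> Sorts D"
  unfolding is_profunctor_def by auto

lemma profunctor_act_el:
  assumes "is_profunctor C D X" "is_path C u c" "is_path D v d'" "x \<in> el X c (fst v)"
  shows "act X u v x \<in> el X (fst u) d'"
proof -
  have "\<forall>u v c d' x. is_path C u c \<and> is_path D v d' \<and> x \<in> el X c (fst v)
      \<longrightarrow> act X u v x \<in> el X (fst u) d'"
    using assms(1) unfolding is_profunctor_def by (elim conjE) assumption
  then show ?thesis using assms by blast
qed

lemma profunctor_act_interchange:
  assumes "is_profunctor C D X" "is_chain C c2 u c1" "is_chain D d0 v d1" "x \<in> el X c1 d0"
  shows "act X (c2,u) (d1,[]) (act X (c1,[]) (d0,v) x)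
    = act X (c2,[]) (d0,v) (act X (c2,u) (d0,[]) x)"
proof -
  have s: "c1 \<in> Sorts C" "d1 \<in> Sorts D" "c2 \<in> Sorts C" "d0 \<in> Sorts D"
    using assms by (auto dest: chain_tgt_sort chain_src)
  have comp: "\<forall>c0 c1 c2 u1 u2 d0 d1 d2 v1 v2 x.
         is_chain C c2 u1 c1 \<and> is_chain C c1 u2 c0 \<and>
         is_chain D d0 v1 d1 \<and> is_chain D d1 v2 d2 \<and> x \<in> el X c0 d0
         \<longrightarrow> act X (c2, u1 @ u2) (d0, v1 @ v2) x
             = act X (c2, u1) (d1, v2) (act X (c1, u2) (d0, v1) x)"
    using assms(1) unfolding is_profunctor_def by (elim conjE) assumption
  have A: "act X (c2,u) (d0,v) x = act X (c2,u) (d1,[]) (act X (c1,[]) (d0,v) x)"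
    using comp[rule_format, of c2 u c1 "[]" c1 d0 v d1 "[]" d1 x] assms s by simp
  have B: "act X (c2,u) (d0,v) x = act X (c2,[]) (d0,v) (act X (c2,u) (d0,[]) x)"
    using comp[rule_format, of c2 "[]" c2 u c1 d0 "[]" d0 v d1 x] assms s by simp
  show ?thesis using A B by simp
qed

declare prov_eq.trans [trans] inst_eq.trans [trans]

locale wf_profpres =
  fixes C :: "('sc,'fc) catpres" and D :: "('sd,'fd) catpres"
    and P :: "('sc,'fc,'sd,'fd,'fp) profpres"
  assumes wfC: "catpres_wf C" and wfD: "catpres_wf D" and wfP: "profpres_wf C D P"
begin

abbreviation "T \<equiv> total C D P"

lemma psrc_sort: "p \<in> PFuns P \<Longrightarrow> psrc P p \<in> Sorts C"
  and ptgt_sort: "p \<in> PFuns P \<Longrightarrow> ptgt P p \<in> Sorts D"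
  using wfP by (auto simp: profpres_wf_def)

lemma ftgt_sort_D: "f \<in> Funs D \<Longrightarrow> ftgt D f \<in> Sorts D" and fsrc_sort_D: "f \<in> Funs D \<Longrightarrow> fsrc D f \<in> Sorts D"
  using wfD by (auto simp: catpres_wf_def)

lemma prov_eq_T_paths: "prov_eq T u v \<Longrightarrow> fst u = fst v \<and> (\<exists>t. is_path T u t \<and> is_path T v t)"
  using prov_eq_paths catpres_wf_total wfC wfD wfP by blast

lemma prov_eq_T_tgt: "prov_eq T u v \<Longrightarrow> is_path T u t \<Longrightarrow> is_path T v t \<and> fst u = fst v"
  using prov_eq_T_paths by (metis is_path_def chain_tgt_unique)

lemma path_append_right:
  "is_path T t (Inr d) \<Longrightarrow> is_chain D d g d' \<Longrightarrow> is_path T (append_right t g) (Inr d')"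
  by (auto simp: is_path_def append_right_def chain_append)

lemma rcp_is_path: "rcp C D P c t \<Longrightarrow> \<exists>d. is_path T t (Inr d) \<and> fst t = Inl c"
  by (auto simp: rcp_def is_path_def chain_total_X psrc_sort intro!: exI[of _ "[]"])

lemma rcp_path_iff:
  "rcp C D P c r \<Longrightarrow> is_path T r (Inr d) \<longleftrightarrow> is_chain D (ptgt P (rcp_sym r)) (rcp_tail r) d"
proof -
  assume r: "rcp C D P c r"
  obtain p g d0 where "r = (Inl c, Inr (Inl p) # map (Inr \<circ> Inr) g)" "p \<in> PFuns P" "psrc P p = c"
    using r by (auto simp: rcp_def)
  then show ?thesis using psrc_sort by (auto simp: is_path_def)
qed

lemma rcp_cross: "rcp C D P c r \<Longrightarrow> is_path T r (Inr d) \<Longrightarrow> cross_path C D P c d r"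
  using rcp_is_path by (auto simp: cross_path_def)

lemma rcp_append:
  "rcp C D P c t \<Longrightarrow> is_path T t (Inr d) \<Longrightarrow> is_chain D d g d' \<Longrightarrow> rcp C D P c (append_right t g)"
proof -
  assume a: "rcp C D P c t" "is_path T t (Inr d)" "is_chain D d g d'"
  then obtain p g0 d0 where t: "t = (Inl c, Inr (Inl p) # map (Inr \<circ> Inr) g0)" "p \<in> PFuns P"
    "psrc P p = c" "is_chain D (ptgt P p) g0 d0" by (auto simp: rcp_def)
  then have "is_chain D (ptgt P p) g0 d" using a(2) by (auto simp: is_path_def)
  then have "is_chain D (ptgt P p) (g0 @ g) d'" using a(3) by (auto simp: chain_append)
  then show ?thesis using t by (auto simp: rcp_def append_right_def intro!: exI[of _ "g0 @ g"])
qed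

lemma inst_eq_prov_eq: "inst_eq C D P c t t' \<Longrightarrow> prov_eq T t t'"
proof (induction rule: inst_eq.induct)
  case (ax t t') then show ?case by (intro prov_eq.ax) (auto simp: total_def)
next
  case (refl t) then show ?case using rcp_is_path prov_eq.refl by metis
next
  case (sym t t') then show ?case by (blast intro: prov_eq.sym)
next
  case (trans t t' t'') then show ?case by (blast intro: prov_eq.trans)
next
  case (app t t' d g)
  have "prov_eq T (fst t, snd t) (fst t', snd t')" using app by simp
  from prov_eq.post[OF this, of "Inr d" "Inr (Inr g)"] app show ?case by auto
next
  case (deq t d u v)
  have "prov_eq T (emb_r u) (emb_r v)" by (rule prov_eq.ax) (use deq in \<open>force simp: total_def\<close>)
  moreover have "fst v = d" using wfD deq by (auto simp: catpres_wf_def)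
  ultimately have "prov_eq T (Inr d, map (Inr \<circ> Inr) (snd u)) (Inr d, map (Inr \<circ> Inr) (snd v))"
    using deq by (auto simp: emb_r_def)
  from prov_eq_prepend[OF this] deq show ?case by (auto simp: is_path_def)
qed

lemma inst_eq_rcp: "inst_eq C D P c t t' \<Longrightarrow> rcp C D P c t \<and> rcp C D P c t'"
proof (induction rule: inst_eq.induct)
  case (app t t' d g)
  then have "is_path T t' (Inr d)" using inst_eq_prov_eq prov_eq_T_tgt by blast
  then show ?case
    using app rcp_append[of c _ d "[g]" "ftgt D g"] ftgt_sort_D fsrc_sort_D by (auto simp: append_right_def)
next
  case (deq t d u v)
  then obtain d' where "is_path D u d'" "is_path D v d'" "fst v = d"
    using wfD by (fastforce simp: catpres_wf_def)
  then show ?case using deq rcp_append[of c t d "snd u" d'] rcp_append[of c t d "snd v" d']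
    unfolding append_right_def
    by (auto simp: is_path_def)
qed auto

lemma inst_eq_append:
  assumes "inst_eq C D P c t t'" "is_path T t (Inr d)" "is_chain D d h d'"
  shows "inst_eq C D P c (append_right t h) (append_right t' h)"
  using assms(3)
proof (induction h arbitrary: d' rule: rev_induct)
  case Nil then show ?case using assms(1) by (simp add: append_right_def)
next
  case (snoc g h)
  then obtain m where m: "is_chain D d h m" "g \<in> Funs D" "fsrc D g = m" "d' = ftgt D g"
    by (auto simp: chain_snoc)
  have "is_path T (append_right t h) (Inr m)" using path_append_right[OF assms(2) m(1)] .
  from inst_eq.app[OF snoc.IH[OF m(1)] this m(2,3)] show ?case by (simp add: append_right_def)
qed

lemma nongenerative_rcp:
  assumes ng: "nongenerative C D P"
  shows "is_chain C c x (psrc P p) \<Longrightarrow> p \<in> PFuns P \<Longrightarrow> is_chain D (ptgt P p) g d \<Longrightarrow>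
    \<exists>r. rcp C D P c r \<and> prov_eq T (Inl c, map Inl x @ Inr (Inl p) # map (Inr \<circ> Inr) g) r"
proof (induction x arbitrary: c)
  case Nil
  let ?r = "(Inl c, Inr (Inl p) # map (Inr \<circ> Inr) g)"
  have r: "rcp C D P c ?r" using Nil by (auto simp: rcp_def)
  from rcp_is_path[OF r] obtain d0 where "is_path T ?r (Inr d0)" by blast
  then have "prov_eq T ?r ?r" by (rule prov_eq.refl)
  with r show ?case by (intro exI[of _ ?r]) (simp add: o_def)
next
  case (Cons f x)
  have "is_chain C (ftgt C f) x (psrc P p)" using Cons.prems(1) by simp
  from Cons.IH[OF this Cons.prems(2,3)] obtain r where r: "rcp C D P (ftgt C f) r"
    "prov_eq T (Inl (ftgt C f), map Inl x @ Inr (Inl p) # map (Inr \<circ> Inr) g) r" by blast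
  then obtain p' g' d' where r': "r = (Inl (ftgt C f), Inr (Inl p') # map (Inr \<circ> Inr) g')"
    "p' \<in> PFuns P" "psrc P p' = ftgt C f" "is_chain D (ptgt P p') g' d'" by (auto simp: rcp_def)
  have c: "c = fsrc C f" "f \<in> Funs C" using Cons by auto
  have "prov_eq T (Inl (ftgt C f), map Inl x @ Inr (Inl p) # map (Inr \<circ> Inr) g)
      (Inl (ftgt C f), Inr (Inl p') # map (Inr \<circ> Inr) g')" using r(2) r'(1) by simp
  from prov_eq.pre[OF this, of "Inl f"] c
  have to_fp': "prov_eq T (Inl c, map Inl (f # x) @ Inr (Inl p) # map (Inr \<circ> Inr) g)
      (append_right (Inl c, [Inl f, Inr (Inl p')]) g')" by (simp add: append_right_def)
  obtain t where t: "rcp C D P c t" "prov_eq T (Inl c, [Inl f, Inr (Inl p')]) t"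
    using ng c r'(2,3) unfolding nongenerative_def by metis
  have fp': "is_path T (Inl c, [Inl f, Inr (Inl p')]) (Inr (ptgt P p'))"
    using c r' ptgt_sort psrc_sort wfC by (auto simp: is_path_def catpres_wf_def)
  have "is_path T t (Inr (ptgt P p'))" using prov_eq_T_tgt[OF t(2) fp'] by simp
  then have "rcp C D P c (append_right t g')" using rcp_append[OF t(1) _ r'(4)] by simp
  moreover have "prov_eq T (append_right (Inl c, [Inl f, Inr (Inl p')]) g') (append_right t g')"
  proof -
    obtain ts where ts: "t = (Inl c, ts)" using rcp_is_path[OF t(1)] by (cases t) auto
    have "is_chain T (Inr (ptgt P p')) (map (Inr \<circ> Inr) g') (Inr d')" using r'(4) by simp
    from prov_eq_append[OF _ fp' this, of ts] t(2) ts show ?thesis by (simp add: append_right_def)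
  qed
  ultimately show ?case using to_fp' prov_eq.trans by blast
qed

definition prov_class :: "('sc+'sd,'fc+'fp+'fd) path \<Rightarrow> ('sc+'sd,'fc+'fp+'fd) path set" where
  "prov_class s = {t. prov_eq T s t}"

lemma el_pres_prof: "el (pres_prof C D P) c d = prov_class ` {t. cross_path C D P c d t}"
  by (auto simp: pres_prof_def quotient_def prov_class_def)

lemma cross_path_sorts: "cross_path C D P c d s \<Longrightarrow> c \<in> Sorts C \<and> d \<in> Sorts D"
  by (auto simp: cross_path_def is_path_def chain_total_X dest: chain_src chain_tgt_sort)

lemma prov_class_self: "cross_path C D P c d s \<Longrightarrow> s \<in> prov_class s"
  by (auto simp: prov_class_def cross_path_def intro: prov_eq.refl)

lemma prov_class_eq: "prov_eq T s s' \<Longrightarrow> prov_class s = prov_class s'"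
  by (auto simp: prov_class_def intro: prov_eq.trans prov_eq.sym)

lemma prov_class_eqD: "cross_path C D P c d s \<Longrightarrow> prov_class s = prov_class s' \<Longrightarrow> prov_eq T s s'"
proof -
  assume a: "cross_path C D P c d s" "prov_class s = prov_class s'"
  then have "s \<in> prov_class s'" using prov_class_self[OF a(1)] by auto
  then show ?thesis by (auto simp: prov_class_def intro: prov_eq.sym)
qed

lemma cross_path_whisker:
  "is_path C u c \<Longrightarrow> is_path D v d' \<Longrightarrow> cross_path C D P c (fst v) s \<Longrightarrow>
    cross_path C D P (fst u) d' (whisker u s v)"
  unfolding cross_path_def whisker_def is_path_def
  by (simp add: chain_append) (metis chain_emb_l chain_emb_r)

lemma prov_eq_whisker:
  assumes u: "is_path C u c" and v: "is_path D v d'" and s: "cross_path C D P c (fst v) s"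
    and ss': "prov_eq T s s'"
  shows "prov_eq T (whisker u s v) (whisker u s' v)"
proof -
  have "fst s = Inl c" "fst s' = Inl c" using s ss' prov_eq_T_paths by (auto simp: cross_path_def)
  then have "prov_eq T (Inl c, snd s) (Inl c, snd s')" using ss' by (metis prod.collapse)
  from prov_eq_append[OF this, of "Inr (fst v)" "map (Inr \<circ> Inr) (snd v)" "Inr d'"] s v
  have "prov_eq T (Inl c, snd s @ map (Inr \<circ> Inr) (snd v)) (Inl c, snd s' @ map (Inr \<circ> Inr) (snd v))"
    by (auto simp: cross_path_def is_path_def)
  moreover have "is_chain T (Inl (fst u)) (map Inl (snd u)) (Inl c)" using u by (simp add: is_path_def)
  ultimately show ?thesis using prov_eq_prepend by (fastforce simp: whisker_def)
qed

lemma act_pres_prof: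
  assumes a: "is_path C u c" "is_path D v d'" "cross_path C D P c (fst v) s"
  shows "act (pres_prof C D P) u v (prov_class s) = prov_class (whisker u s v)"
proof -
  have "act (pres_prof C D P) u v (prov_class s) = (\<Union>t\<in>prov_class s. prov_class (whisker u t v))"
    by (simp add: pres_prof_def prov_class_def whisker_def emb_l_def emb_r_def)
  also have "\<dots> = prov_class (whisker u s v)"
  proof
    show "(\<Union>t\<in>prov_class s. prov_class (whisker u t v)) \<subseteq> prov_class (whisker u s v)"
    proof
      fix x assume "x \<in> (\<Union>t\<in>prov_class s. prov_class (whisker u t v))"
      then obtain t where t: "prov_eq T s t" "prov_eq T (whisker u t v) x"
        by (auto simp: prov_class_def)
      have "prov_eq T (whisker u s v) (whisker u t v)" using prov_eq_whisker[OF a t(1)] .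
      then show "x \<in> prov_class (whisker u s v)" using t(2)
        by (auto simp: prov_class_def intro: prov_eq.trans)
    qed
    show "prov_class (whisker u s v) \<subseteq> (\<Union>t\<in>prov_class s. prov_class (whisker u t v))"
      using prov_class_self[OF a(3)] by auto
  qed
  finally show ?thesis .
qed

end

locale presentation = wf_profpres C D P for C :: "('sc,'fc) catpres" and D :: "('sd,'fd) catpres"
    and P :: "('sc,'fc,'sd,'fd,'fp) profpres" +
  fixes PP :: "('sc,'fc,'sd,'fd,'a) profunctor"
    and phi :: "'sc \<Rightarrow> 'sd \<Rightarrow> 'a \<Rightarrow> ('sc+'sd,'fc+'fp+'fd) path set"
  assumes prof: "is_profunctor C D PP"
  and bij: "\<And>c d. c \<in> Sorts C \<Longrightarrow> d \<in> Sorts D \<Longrightarrow>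
      bij_betw (phi c d) (el PP c d) (el (pres_prof C D P) c d)"
  and natu: "\<And>u v c d' x. is_path C u c \<Longrightarrow> is_path D v d' \<Longrightarrow> x \<in> el PP c (fst v) \<Longrightarrow>
      phi (fst u) d' (act PP u v x) = act (pres_prof C D P) u v (phi c (fst v) x)"
  and cur: "curryable C D P"
begin

definition elem where "elem c d s = inv_into (el PP c d) (phi c d) (prov_class s)"

definition repr where "repr c d a = (SOME s. cross_path C D P c d s \<and> phi c d a = prov_class s)"

lemma elem_in:
  "cross_path C D P c d s \<Longrightarrow> elem c d s \<in> el PP c d \<and> phi c d (elem c d s) = prov_class s"
proof -
  assume a: "cross_path C D P c d s"
  then have b: "bij_betw (phi c d) (el PP c d) (el (pres_prof C D P) c d)"
    using bij cross_path_sorts by blast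
  have "prov_class s \<in> el (pres_prof C D P) c d" using a el_pres_prof by auto
  then show ?thesis using b unfolding elem_def
    by (metis bij_betw_def bij_betw_inv_into_right inv_into_into)
qed

lemma elem_prov_eq: "prov_eq T s s' \<Longrightarrow> elem c d s = elem c d s'"
  by (simp add: elem_def prov_class_eq)

lemma repr_cross:
  "a \<in> el PP c d \<Longrightarrow> cross_path C D P c d (repr c d a) \<and> phi c d a = prov_class (repr c d a)"
proof -
  assume a: "a \<in> el PP c d"
  then have s: "c \<in> Sorts C" "d \<in> Sorts D" using profunctor_el_sorts[OF prof a] by auto
  then have "phi c d a \<in> el (pres_prof C D P) c d" using a bij by (auto simp: bij_betw_def)
  then obtain s where "cross_path C D P c d s \<and> phi c d a = prov_class s" using el_pres_prof by auto
  then show ?thesis unfolding repr_def by (rule someI)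
qed

lemma elem_repr: "a \<in> el PP c d \<Longrightarrow> elem c d (repr c d a) = a"
proof -
  assume a: "a \<in> el PP c d"
  then have s: "c \<in> Sorts C" "d \<in> Sorts D" using profunctor_el_sorts[OF prof a] by auto
  then have "inj_on (phi c d) (el PP c d)" using bij by (auto simp: bij_betw_def)
  then show ?thesis using repr_cross[OF a] a unfolding elem_def by (metis inv_into_f_f)
qed

lemma repr_elem: "cross_path C D P c d s \<Longrightarrow> prov_eq T (repr c d (elem c d s)) s"
proof -
  assume a: "cross_path C D P c d s"
  from elem_in[OF a] have "phi c d (elem c d s) = prov_class s" "elem c d s \<in> el PP c d" by auto
  with repr_cross[of "elem c d s" c d]
  have "prov_class (repr c d (elem c d s)) = prov_class s" "cross_path C D P c d (repr c d (elem c d s))"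
    by auto
  then show ?thesis using prov_class_eqD by blast
qed

lemma elem_whisker:
  assumes a: "is_path C u c" "is_path D v d'" "cross_path C D P c (fst v) s"
  shows "elem (fst u) d' (whisker u s v) = act PP u v (elem c (fst v) s)"
proof -
  have e: "elem c (fst v) s \<in> el PP c (fst v)" "phi c (fst v) (elem c (fst v) s) = prov_class s"
    using elem_in[OF a(3)] by auto
  have x: "act PP u v (elem c (fst v) s) \<in> el PP (fst u) d'"
    using profunctor_act_el[OF prof a(1,2) e(1)] .
  have c: "cross_path C D P (fst u) d' (whisker u s v)" using cross_path_whisker[OF a] .
  have s: "fst u \<in> Sorts C" "d' \<in> Sorts D" using cross_path_sorts[OF c] by auto
  have inj: "inj_on (phi (fst u) d') (el PP (fst u) d')"
    using bij[OF s] by (auto simp: bij_betw_def)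
  have "phi (fst u) d' (act PP u v (elem c (fst v) s)) = prov_class (whisker u s v)"
    using natu[OF a(1,2) e(1)] e(2) act_pres_prof[OF a] by simp
  also have "\<dots> = phi (fst u) d' (elem (fst u) d' (whisker u s v))" using elem_in[OF c] by simp
  finally show ?thesis using inj x elem_in[OF c] by (metis inj_onD)
qed

lemma cross_path_rcp: "cross_path C D P c d s \<Longrightarrow> \<exists>r. rcp C D P c r \<and> prov_eq T s r"
proof -
  assume a: "cross_path C D P c d s"
  then obtain x p g where "s = (Inl c, map Inl x @ Inr (Inl p) # map (Inr \<circ> Inr) g)"
    "is_chain C c x (psrc P p)" "p \<in> PFuns P" "is_chain D (ptgt P p) g d"
    by (cases s) (auto simp: cross_path_def is_path_def chain_total_X)
  then show ?thesis using nongenerative_rcp cur by (auto simp: curryable_def)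
qed

lemma conservative_inst_eq:
  "rcp C D P c t \<Longrightarrow> rcp C D P c t' \<Longrightarrow> prov_eq T t t' \<Longrightarrow> inst_eq C D P c t t'"
  using cur unfolding curryable_def conservative_def by blast

definition rcp_of :: "'sc \<Rightarrow> ('sc+'sd,'fc+'fp+'fd) path \<Rightarrow> ('sc+'sd,'fc+'fp+'fd) path" where
  "rcp_of c s = (SOME r. rcp C D P c r \<and> prov_eq T s r)"

lemma rcp_of: "cross_path C D P c d s \<Longrightarrow> rcp C D P c (rcp_of c s) \<and> prov_eq T s (rcp_of c s)"
  unfolding rcp_of_def using cross_path_rcp by (rule someI_ex)

lemma rcp_of_path: "cross_path C D P c d s \<Longrightarrow> is_path T (rcp_of c s) (Inr d)"
  using rcp_of prov_eq_T_tgt by (fastforce simp: cross_path_def)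

end

lemma presentation_of_prof_iso:
  assumes "catpres_wf C" "catpres_wf D" "profpres_wf C D P" "curryable C D P"
    and "is_profunctor C D PP" "prof_iso C D PP (pres_prof C D P)"
  obtains phi where "presentation C D P PP phi"
proof -
  from assms(6) obtain phi where
    "\<forall>c\<in>Sorts C. \<forall>d\<in>Sorts D. bij_betw (phi c d) (el PP c d) (el (pres_prof C D P) c d)"
    "\<forall>u v c d' x. is_path C u c \<and> is_path D v d' \<and> x \<in> el PP c (fst v)
        \<longrightarrow> phi (fst u) d' (act PP u v x) = act (pres_prof C D P) u v (phi c (fst v) x)"
    unfolding prof_iso_def by blast
  then have "presentation C D P PP phi"
    using assms by (simp add: presentation_def presentation_axioms_def wf_profpres_def)
  then show ?thesis by (rule that)
qed

section \<open>The composite presentation\<close>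

locale composite = P: presentation C D P PP phiP + Q: presentation D E Q QQ phiQ
  for C :: "('sc,'fc) catpres" and D :: "('sd,'fd) catpres" and E :: "('se,'fe) catpres"
    and P :: "('sc,'fc,'sd,'fd,'fp) profpres" and Q :: "('sd,'fd,'se,'fe,'fq) profpres"
    and PP :: "('sc,'fc,'sd,'fd,'a) profunctor" and QQ :: "('sd,'fd,'se,'fe,'b) profunctor"
    and phiP phiQ +
  assumes finP: "finite_profpres P" and finQ: "finite_profpres Q" and finC: "finite_catpres C"
begin

definition composable where "composable = {(p,q). p \<in> PFuns P \<and> q \<in> PFuns Q \<and> ptgt P p = psrc Q q}"

lemma finite_composable: "finite composable"
proof -
  have "composable \<subseteq> PFuns P \<times> PFuns Q" by (auto simp: composable_def)
  then show ?thesis using finP finQ by (auto simp: finite_profpres_def intro: finite_subset)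
qed

text \<open>The generators of R have type \<open>nat\<close>: generator \<open>i\<close> stands for the composable pair
  \<open>pairs ! i\<close>.\<close>
definition pairs where "pairs = (SOME xs. set xs = composable \<and> distinct xs)"

lemma pairs: "set pairs = composable \<and> distinct pairs"
  unfolding pairs_def using finite_distinct_list[OF finite_composable] by (rule someI_ex)

definition pair_index where "pair_index pq = (THE i. i < length pairs \<and> pairs ! i = pq)"

lemma pair_index:
  assumes "pq \<in> composable"
  shows "pair_index pq < length pairs \<and> pairs ! pair_index pq = pq"
proof -
  have "\<exists>!i. i < length pairs \<and> pairs ! i = pq" using distinct_Ex1[of pairs pq] pairs assms by auto
  from theI'[OF this] show ?thesis unfolding pair_index_def .
qed

lemma pair_index_nth: "i < length pairs \<Longrightarrow> pair_index (pairs ! i) = i"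
  using pair_index[of "pairs ! i"] pairs nth_eq_iff_index_eq[of pairs] by (metis nth_mem)

lemma composable_nth: "i < length pairs \<Longrightarrow> pairs ! i \<in> composable" using pairs nth_mem by metis

definition pair_path :: "'fp \<Rightarrow> ('sd+'se,'fd+'fq+'fe) path \<Rightarrow> ('sc+'se,'fc+nat+'fe) path" where
  "pair_path p r =
     (Inl (psrc P p), Inr (Inl (pair_index (p, rcp_sym r))) # map (Inr \<circ> Inr) (rcp_tail r))"

definition prefix_D ::
  "'fp \<Rightarrow> 'fd list \<Rightarrow> ('sd+'se,'fd+'fq+'fe) path \<Rightarrow> ('sd+'se,'fd+'fq+'fe) path" where
  "prefix_D p g t = (Inl (ptgt P p), map Inl g @ snd t)"

text \<open>For a right cross-path \<open>r = p.g\<close> of P and a cross-path t of Q, \<open>tensor_rcp r t\<close> is the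
  right cross-path \<open>(p,q).h\<close> of R, where \<open>q.h\<close> is a right cross-path of Q equal to \<open>g.t\<close>;
  it represents \<open>[r] \<otimes> [t]\<close>.\<close>
definition tensor_rcp ::
  "('sc+'sd,'fc+'fp+'fd) path \<Rightarrow> ('sd+'se,'fd+'fq+'fe) path \<Rightarrow> ('sc+'se,'fc+nat+'fe) path" where
  "tensor_rcp r t =
     pair_path (rcp_sym r) (Q.rcp_of (ptgt P (rcp_sym r)) (prefix_D (rcp_sym r) (rcp_tail r) t))"

definition tensor where "tensor c s t = tensor_rcp (P.rcp_of c s) t"

definition sym_path :: "'fq \<Rightarrow> ('sd+'se,'fd+'fq+'fe) path" where
  "sym_path q = (Inl (psrc Q q), [Inr (Inl q)])"

definition eqs_P where
  "eqs_P = (\<lambda>((s0,s0'),q). (tensor_rcp s0 (sym_path q), tensor_rcp s0' (sym_path q))) `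
     {((s0,s0'),q). (s0,s0') \<in> PEqs P \<and> q \<in> PFuns Q \<and> (\<exists>c. rcp C D P c s0 \<and> rcp C D P c s0') \<and>
        is_path P.T s0 (Inr (psrc Q q))}"

definition eqs_Q where
  "eqs_Q = (\<lambda>((t,t'),p). (pair_path p t, pair_path p t')) `
     {((t,t'),p). (t,t') \<in> PEqs Q \<and> p \<in> PFuns P \<and> rcp D E Q (ptgt P p) t \<and> rcp D E Q (ptgt P p) t'}"

definition eqs_nongen where
  "eqs_nongen = (\<lambda>(f,i). ((Inl (fsrc C f), [Inl f, Inr (Inl i)]),
       tensor_rcp (P.rcp_of (fsrc C f) (Inl (fsrc C f), [Inl f, Inr (Inl (fst (pairs ! i)))]))
         (sym_path (snd (pairs ! i))))) `
     {(f,i). f \<in> Funs C \<and> i < length pairs \<and> ftgt C f = psrc P (fst (pairs ! i))}"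

definition R :: "('sc,'fc,'se,'fe,nat) profpres" where
  "R = \<lparr> PFuns = {..<length pairs}, psrc = (\<lambda>i. psrc P (fst (pairs ! i))),
         ptgt = (\<lambda>i. ptgt Q (snd (pairs ! i))), PEqs = eqs_P \<union> eqs_Q \<union> eqs_nongen \<rparr>"

lemma R_simps[simp]:
  "PFuns R = {..<length pairs}" "psrc R i = psrc P (fst (pairs ! i))"
  "ptgt R i = ptgt Q (snd (pairs ! i))" "PEqs R = eqs_P \<union> eqs_Q \<union> eqs_nongen"
  by (auto simp: R_def)

lemma finite_R: "finite_profpres R"
proof -
  have "finite eqs_P" unfolding eqs_P_def
    by (rule finite_imageI, rule finite_subset[of _ "PEqs P \<times> PFuns Q"])
      (use finP finQ in \<open>auto simp: finite_profpres_def\<close>)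
  moreover have "finite eqs_Q" unfolding eqs_Q_def
    by (rule finite_imageI, rule finite_subset[of _ "PEqs Q \<times> PFuns P"])
      (use finP finQ in \<open>auto simp: finite_profpres_def\<close>)
  moreover have "finite eqs_nongen" unfolding eqs_nongen_def
    by (rule finite_imageI, rule finite_subset[of _ "Funs C \<times> {..<length pairs}"])
      (use finC in \<open>auto simp: finite_catpres_def\<close>)
  ultimately show ?thesis by (simp add: finite_profpres_def)
qed

lemma pair_path_cross:
  assumes r: "rcp D E Q d r" "is_path Q.T r (Inr e)" and p: "p \<in> PFuns P" "ptgt P p = d"
  shows "rcp C E R (psrc P p) (pair_path p r) \<and> cross_path C E R (psrc P p) e (pair_path p r)"
proof -
  have q: "rcp_sym r \<in> PFuns Q" "psrc Q (rcp_sym r) = d" using rcp_decomp[OF r(1)] by auto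
  have ch: "is_chain E (ptgt Q (rcp_sym r)) (rcp_tail r) e"
    using Q.rcp_path_iff[OF r(1)] r(2) by simp
  have S: "(p, rcp_sym r) \<in> composable" using p q by (auto simp: composable_def)
  note i = pair_index[OF S]
  have "rcp C E R (psrc P p) (pair_path p r)"
    unfolding pair_path_def rcp_def using i ch by auto
  moreover have "is_path (total C E R) (pair_path p r) (Inr e)"
    unfolding pair_path_def is_path_def using i ch P.psrc_sort[OF p(1)] by auto
  ultimately show ?thesis by (auto simp: cross_path_def pair_path_def)
qed

lemma cross_path_prefix_D:
  assumes r: "rcp C D P c r" "is_path P.T r (Inr d)" and t: "cross_path D E Q d e t"
  shows "cross_path D E Q (ptgt P (rcp_sym r)) e (prefix_D (rcp_sym r) (rcp_tail r) t)"
proof -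
  have ch: "is_chain D (ptgt P (rcp_sym r)) (rcp_tail r) d"
    using P.rcp_path_iff[OF r(1)] r(2) by simp
  show ?thesis using t ch unfolding cross_path_def prefix_D_def is_path_def
    by (auto simp: chain_append intro!: exI[of _ "Inl d"])
qed

lemma tensor_rcp_cross:
  assumes r: "rcp C D P c r" "is_path P.T r (Inr d)" and t: "cross_path D E Q d e t"
  shows "rcp C E R c (tensor_rcp r t) \<and> cross_path C E R c e (tensor_rcp r t)"
proof -
  let ?y = "prefix_D (rcp_sym r) (rcp_tail r) t"
  have y: "cross_path D E Q (ptgt P (rcp_sym r)) e ?y" by (rule cross_path_prefix_D[OF r t])
  note n = Q.rcp_of[OF y]
  have pth: "is_path Q.T (Q.rcp_of (ptgt P (rcp_sym r)) ?y) (Inr e)"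
    using Q.rcp_of_path[OF y] .
  have "rcp_sym r \<in> PFuns P" "psrc P (rcp_sym r) = c" using rcp_decomp[OF r(1)] by auto
  then show ?thesis using pair_path_cross[OF conjunct1[OF n] pth] unfolding tensor_rcp_def by auto
qed

lemma cross_path_sym_path: "q \<in> PFuns Q \<Longrightarrow> cross_path D E Q (psrc Q q) (ptgt Q q) (sym_path q)"
  using Q.psrc_sort Q.ptgt_sort by (auto simp: cross_path_def sym_path_def is_path_def)

lemma tensor_cross:
  assumes s: "cross_path C D P c d s" and t: "cross_path D E Q d e t"
  shows "rcp C E R c (tensor c s t) \<and> cross_path C E R c e (tensor c s t)"
proof -
  note n = P.rcp_of[OF s]
  have "is_path P.T (P.rcp_of c s) (Inr d)" using P.rcp_of_path[OF s] .
  then show ?thesis using tensor_rcp_cross[OF conjunct1[OF n] _ t] unfolding tensor_def by auto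
qed

lemma eqs_P_cross:
  assumes "(a,b) \<in> eqs_P"
  shows "\<exists>c e. cross_path C E R c e a \<and> cross_path C E R c e b"
proof -
  obtain s s' q c where ab: "a = tensor_rcp s (sym_path q)" "b = tensor_rcp s' (sym_path q)"
    and ss': "(s,s') \<in> PEqs P" and q: "q \<in> PFuns Q"
    and s: "rcp C D P c s" "rcp C D P c s'" "is_path P.T s (Inr (psrc Q q))"
    using assms unfolding eqs_P_def by auto
  have "prov_eq P.T s s'" by (rule prov_eq.ax) (use ss' in \<open>auto simp: total_def\<close>)
  then have "is_path P.T s' (Inr (psrc Q q))" using P.prov_eq_T_tgt s(3) by blast
  then show ?thesis
    using tensor_rcp_cross[OF s(1,3) cross_path_sym_path[OF q]]
      tensor_rcp_cross[OF s(2) _ cross_path_sym_path[OF q]] ab by blast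
qed

lemma eqs_Q_cross:
  assumes "(a,b) \<in> eqs_Q"
  shows "\<exists>c e. cross_path C E R c e a \<and> cross_path C E R c e b"
proof -
  obtain t t' p where ab: "a = pair_path p t" "b = pair_path p t'" and tt': "(t,t') \<in> PEqs Q"
    and p: "p \<in> PFuns P" and t: "rcp D E Q (ptgt P p) t" "rcp D E Q (ptgt P p) t'"
    using assms unfolding eqs_Q_def by auto
  obtain d e where "cross_path D E Q d e t" "cross_path D E Q d e t'"
    using Q.wfP tt' unfolding profpres_wf_def by blast
  then have "is_path Q.T t (Inr e)" "is_path Q.T t' (Inr e)" by (auto simp: cross_path_def)
  then show ?thesis using pair_path_cross[OF t(1) _ p] pair_path_cross[OF t(2) _ p] ab by blast
qed

lemma eqs_nongen_cross:
  assumes "(a,b) \<in> eqs_nongen"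
  shows "\<exists>c e. cross_path C E R c e a \<and> cross_path C E R c e b"
proof -
  obtain f i where ab: "a = (Inl (fsrc C f), [Inl f, Inr (Inl i)])"
    "b = tensor_rcp (P.rcp_of (fsrc C f) (Inl (fsrc C f), [Inl f, Inr (Inl (fst (pairs ! i)))]))
      (sym_path (snd (pairs ! i)))"
    and f: "f \<in> Funs C" "ftgt C f = psrc P (fst (pairs ! i))" and i: "i < length pairs"
    using assms unfolding eqs_nongen_def by auto
  obtain p q where pq: "pairs ! i = (p,q)" by fastforce
  have S: "p \<in> PFuns P" "q \<in> PFuns Q" "ptgt P p = psrc Q q"
    using composable_nth[OF i] pq by (auto simp: composable_def)
  have fs: "fsrc C f \<in> Sorts C" "ftgt C f \<in> Sorts C" using P.wfC f(1) by (auto simp: catpres_wf_def)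
  have s: "cross_path C D P (fsrc C f) (ptgt P p) (Inl (fsrc C f), [Inl f, Inr (Inl p)])"
    using f fs S pq P.ptgt_sort Q.psrc_sort by (auto simp: cross_path_def is_path_def)
  have "cross_path C E R (fsrc C f) (ptgt Q q) b"
    using tensor_cross[OF s, of "ptgt Q q" "sym_path q"] cross_path_sym_path[OF S(2)] S ab(2) pq
    by (auto simp: tensor_def)
  moreover have "cross_path C E R (fsrc C f) (ptgt Q q) a"
    using ab(1) f fs S pq i Q.ptgt_sort by (auto simp: cross_path_def is_path_def)
  ultimately show ?thesis by blast
qed

lemma wf_R: "profpres_wf C E R"
proof -
  have "\<forall>p\<in>PFuns R. psrc R p \<in> Sorts C \<and> ptgt R p \<in> Sorts E"
    using composable_nth P.psrc_sort Q.ptgt_sort by (fastforce simp: composable_def)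
  moreover have "\<exists>c e. cross_path C E R c e a \<and> cross_path C E R c e b" if "(a,b) \<in> PEqs R" for a b
    using that eqs_P_cross eqs_Q_cross eqs_nongen_cross unfolding R_simps by blast
  ultimately show ?thesis unfolding profpres_wf_def by blast
qed

sublocale R: wf_profpres C E R
  by unfold_locales (use P.wfC Q.wfD wf_R in auto)

lemma pair_path_append:
  "rcp D E Q d t \<Longrightarrow> pair_path p (append_right t h) = append_right (pair_path p t) h"
  by (auto simp: rcp_def pair_path_def append_right_def rcp_tail_def o_def)

lemma pair_path_rcp:
  assumes "rcp D E Q d t" "p \<in> PFuns P" "ptgt P p = d"
  shows "rcp C E R (psrc P p) (pair_path p t)"
    and "is_path Q.T t (Inr e) \<Longrightarrow> is_path R.T (pair_path p t) (Inr e)"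
  using pair_path_cross[OF assms(1) _ assms(2,3)] Q.rcp_is_path[OF assms(1)]
  by (auto simp: cross_path_def)

lemma eqs_QI:
  "(t,t') \<in> PEqs Q \<Longrightarrow> p \<in> PFuns P \<Longrightarrow> rcp D E Q (ptgt P p) t \<Longrightarrow> rcp D E Q (ptgt P p) t' \<Longrightarrow>
    (pair_path p t, pair_path p t') \<in> eqs_Q"
  unfolding eqs_Q_def by (rule image_eqI[where x="((t,t'),p)"]) auto

lemma inst_eq_pair_path:
  assumes "inst_eq D E Q d t t'" "p \<in> PFuns P" "ptgt P p = d"
  shows "inst_eq C E R (psrc P p) (pair_path p t) (pair_path p t')"
  using assms(1)
proof (induction rule: inst_eq.induct)
  case (ax t t')
  then show ?case
    using eqs_QI[OF ax(1) assms(2)] assms pair_path_rcp(1)[OF ax(2)] pair_path_rcp(1)[OF ax(3)]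
    by (intro inst_eq.ax) auto
next
  case (refl t) then show ?case using pair_path_rcp[OF refl assms(2,3)] by (intro inst_eq.refl) auto
next
  case (sym t t') then show ?case by (blast intro: inst_eq.sym)
next
  case (trans t t' t'') then show ?case by (blast intro: inst_eq.trans)
next
  case (app t t' e g)
  have rt: "rcp D E Q d t" "rcp D E Q d t'" using Q.inst_eq_rcp[OF app(1)] by auto
  have "is_path R.T (pair_path p t) (Inr e)" using pair_path_rcp[OF rt(1) assms(2,3)] app by auto
  from inst_eq.app[OF app.IH this app(3,4)] show ?case
    using pair_path_append[OF rt(1), of p "[g]"] pair_path_append[OF rt(2), of p "[g]"]
    by (simp add: append_right_def)
next
  case (deq t e u v)
  have m: "rcp C E R (psrc P p) (pair_path p t)" "is_path R.T (pair_path p t) (Inr e)"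
    using pair_path_rcp[OF deq(1) assms(2,3)] deq by auto
  from inst_eq.deq[OF m deq(3,4)] show ?case
    using pair_path_append[OF deq(1), of p "snd u"] pair_path_append[OF deq(1), of p "snd v"]
    by (simp add: append_right_def)
qed

lemma tensor_rcp_cong_right:
  assumes r: "rcp C D P c r" "is_path P.T r (Inr d)"
    and t: "cross_path D E Q d e t" "cross_path D E Q d e t'" and tt': "prov_eq Q.T t t'"
  shows "inst_eq C E R c (tensor_rcp r t) (tensor_rcp r t')"
proof -
  let ?p = "rcp_sym r" and ?g = "rcp_tail r"
  let ?d = "ptgt P ?p"
  have y: "cross_path D E Q ?d e (prefix_D ?p ?g t)" "cross_path D E Q ?d e (prefix_D ?p ?g t')"
    using cross_path_prefix_D[OF r] t by auto
  have "prov_eq Q.T (Inl d, snd t) (Inl d, snd t')"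
    using tt' t by (auto simp: cross_path_def) (metis prod.collapse)
  from prov_eq_prepend[OF this, of "Inl ?d" "map Inl ?g"]
  have "prov_eq Q.T (prefix_D ?p ?g t) (prefix_D ?p ?g t')"
    using P.rcp_path_iff[OF r(1)] r(2) by (simp add: prefix_D_def)
  then have "prov_eq Q.T (Q.rcp_of ?d (prefix_D ?p ?g t)) (Q.rcp_of ?d (prefix_D ?p ?g t'))"
    using Q.rcp_of[OF y(1)] Q.rcp_of[OF y(2)] by (meson prov_eq.sym prov_eq.trans)
  then have "inst_eq D E Q ?d (Q.rcp_of ?d (prefix_D ?p ?g t)) (Q.rcp_of ?d (prefix_D ?p ?g t'))"
    using Q.rcp_of[OF y(1)] Q.rcp_of[OF y(2)] Q.conservative_inst_eq by blast
  from inst_eq_pair_path[OF this] rcp_decomp[OF r(1)] show ?thesis unfolding tensor_rcp_def by auto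
qed

lemma tensor_rcp_append:
  assumes r: "rcp C D P c r" "is_path P.T r (Inr d)"
    and t: "cross_path D E Q d e' t" and h: "is_chain E e' h e"
  shows "inst_eq C E R c (tensor_rcp r (append_right t h)) (append_right (tensor_rcp r t) h)"
proof -
  let ?p = "rcp_sym r" and ?g = "rcp_tail r"
  let ?d = "ptgt P ?p" and ?y = "prefix_D (rcp_sym r) (rcp_tail r) t"
  let ?n = "Q.rcp_of ?d ?y"
  have y: "cross_path D E Q ?d e' ?y" using cross_path_prefix_D[OF r t] .
  note n = Q.rcp_of[OF y]
  have pn: "is_path Q.T ?n (Inr e')"
    using Q.rcp_of_path[OF y] .
  have "cross_path D E Q d e (append_right t h)"
    using t h by (auto simp: cross_path_def append_right_def is_path_def chain_append)
  from cross_path_prefix_D[OF r this] have y': "cross_path D E Q ?d e (prefix_D ?p ?g (append_right t h))" .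
  obtain z where z: "?n = (Inl ?d, z)" using rcp_decomp[OF conjunct1[OF n]] by auto
  have "prov_eq Q.T (Inl ?d, snd ?y) (Inl ?d, z)" using n z by (simp add: prefix_D_def)
  from prov_eq_append[OF this, of "Inr e'" "map (Inr \<circ> Inr) h" "Inr e"] y h
  have "prov_eq Q.T (prefix_D ?p ?g (append_right t h)) (Inl ?d, z @ map (Inr \<circ> Inr) h)"
    by (simp add: cross_path_def is_path_def prefix_D_def append_right_def)
  then have "prov_eq Q.T (prefix_D ?p ?g (append_right t h)) (append_right ?n h)"
    by (simp add: z append_right_def)
  then have "prov_eq Q.T (Q.rcp_of ?d (prefix_D ?p ?g (append_right t h))) (append_right ?n h)"
    using Q.rcp_of[OF y'] by (meson prov_eq.sym prov_eq.trans)
  moreover have "rcp D E Q ?d (append_right ?n h)" using Q.rcp_append[OF conjunct1[OF n] pn h] .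
  ultimately have "inst_eq D E Q ?d (Q.rcp_of ?d (prefix_D ?p ?g (append_right t h))) (append_right ?n h)"
    using Q.rcp_of[OF y'] Q.conservative_inst_eq by blast
  from inst_eq_pair_path[OF this] rcp_decomp[OF r(1)] pair_path_append[OF conjunct1[OF n]]
  show ?thesis unfolding tensor_rcp_def by auto
qed

lemma tensor_rcp_shift:
  assumes "rcp C D P c s"
  shows "tensor_rcp (append_right s g) t = tensor_rcp s (x, map Inl g @ snd t)"
proof -
  obtain p g0 where "s = (Inl c, Inr (Inl p) # map (Inr \<circ> Inr) g0)"
    using assms by (auto simp: rcp_def)
  then show ?thesis by (simp add: tensor_rcp_def rcp_tail_def prefix_D_def append_right_def o_def)
qed

lemma eqs_PI:
  "(s0,s0') \<in> PEqs P \<Longrightarrow> q \<in> PFuns Q \<Longrightarrow> rcp C D P c s0 \<Longrightarrow> rcp C D P c s0' \<Longrightarrow>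
    is_path P.T s0 (Inr (psrc Q q)) \<Longrightarrow> (tensor_rcp s0 (sym_path q), tensor_rcp s0' (sym_path q)) \<in> eqs_P"
  unfolding eqs_P_def by (rule image_eqI[where x="((s0,s0'),q)"]) auto

text \<open>Write t as \<open>q.h\<close>: the equation \<open>s.q = s'.q\<close> is one of \<open>eqs_P\<close>, and appending h
  carries it over to \<open>s.t = s'.t\<close>.\<close>
lemma tensor_rcp_eqs_P:
  assumes ss': "(s,s') \<in> PEqs P" and s: "rcp C D P c s" "rcp C D P c s'" "is_path P.T s (Inr d)"
    and t: "cross_path D E Q d e t"
  shows "inst_eq C E R c (tensor_rcp s t) (tensor_rcp s' t)"
proof -
  let ?r = "Q.rcp_of d t"
  let ?q = "rcp_sym ?r" and ?h = "rcp_tail ?r"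
  note r = Q.rcp_of[OF t]
  have "prov_eq P.T s s'" by (rule prov_eq.ax) (use ss' in \<open>auto simp: total_def\<close>)
  then have s'd: "is_path P.T s' (Inr d)" using P.prov_eq_T_tgt s(3) by blast
  have q: "?r = append_right (sym_path ?q) ?h" "?q \<in> PFuns Q" "psrc Q ?q = d"
    using rcp_decomp[OF conjunct1[OF r]] by (auto simp: append_right_def sym_path_def)
  have "is_path Q.T ?r (Inr e)" using Q.rcp_of_path[OF t] .
  then have h: "is_chain E (ptgt Q ?q) ?h e" and rt: "cross_path D E Q d e ?r"
    using Q.rcp_path_iff[OF conjunct1[OF r]] Q.rcp_cross[OF conjunct1[OF r]] by auto
  have qc: "cross_path D E Q d (ptgt Q ?q) (sym_path ?q)" using cross_path_sym_path[OF q(2)] q(3) by simp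
  note sq = tensor_rcp_cross[OF s(1,3) qc] and s'q = tensor_rcp_cross[OF s(2) s'd qc]
  have "inst_eq C E R c (tensor_rcp s t) (tensor_rcp s ?r)"
    using tensor_rcp_cong_right[OF s(1,3) t rt] r by blast
  also have "inst_eq C E R c (tensor_rcp s ?r) (append_right (tensor_rcp s (sym_path ?q)) ?h)"
    using tensor_rcp_append[OF s(1,3) qc h] q(1) by simp
  also have "inst_eq C E R c (append_right (tensor_rcp s (sym_path ?q)) ?h)
      (append_right (tensor_rcp s' (sym_path ?q)) ?h)"
  proof -
    have "inst_eq C E R c (tensor_rcp s (sym_path ?q)) (tensor_rcp s' (sym_path ?q))"
      using eqs_PI[OF ss' q(2) s(1,2)] s(3) q(3) sq s'q by (intro inst_eq.ax) auto
    then show ?thesis using R.inst_eq_append[OF _ _ h] sq by (auto simp: cross_path_def)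
  qed
  also have "inst_eq C E R c (append_right (tensor_rcp s' (sym_path ?q)) ?h) (tensor_rcp s' ?r)"
    using tensor_rcp_append[OF s(2) s'd qc h] q(1) by (simp add: inst_eq.sym)
  also have "inst_eq C E R c (tensor_rcp s' ?r) (tensor_rcp s' t)"
    using tensor_rcp_cong_right[OF s(2) s'd rt t] r by (blast intro: prov_eq.sym)
  finally show ?thesis .
qed

lemma tensor_rcp_eqs_D:
  assumes uv: "(u,v) \<in> Eqs D" and s: "rcp C D P c s" "is_path P.T s (Inr (fst u))"
    and su: "is_path P.T (append_right s (snd u)) (Inr d)" and t: "cross_path D E Q d e t"
  shows "inst_eq C E R c (tensor_rcp (append_right s (snd u)) t) (tensor_rcp (append_right s (snd v)) t)"
proof -
  let ?d0 = "fst u"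
  obtain d1 where u1: "is_path D u d1" "is_path D v d1" "fst v = ?d0"
    using P.wfD uv by (fastforce simp: catpres_wf_def)
  have "is_path P.T (append_right s (snd u)) (Inr d1)"
    using P.path_append_right[OF s(2)] u1(1) by (simp add: is_path_def)
  then have "d = d1" using su unfolding is_path_def by (metis chain_tgt_unique sum.inject(2))
  have "prov_eq Q.T (emb_l u) (emb_l v)" using prov_eq_emb_l prov_eq.ax[OF uv] by blast
  then have pe: "prov_eq Q.T (Inl ?d0, map Inl (snd u)) (Inl ?d0, map Inl (snd v))"
    using u1 by (simp add: emb_l_def)
  have pt: "is_path Q.T (Inl ?d0, map Inl (snd u)) (Inl d1)" using u1 by (auto simp: is_path_def)
  have tc: "is_chain Q.T (Inl d1) (snd t) (Inr e)"
    using t \<open>d = d1\<close> by (auto simp: cross_path_def is_path_def)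
  have pr: "prov_eq Q.T (Inl ?d0, map Inl (snd u) @ snd t) (Inl ?d0, map Inl (snd v) @ snd t)"
    using prov_eq_append[OF pe pt tc] .
  have c1: "cross_path D E Q ?d0 e (Inl ?d0, map Inl (snd u) @ snd t)" using pt tc
    by (auto simp: cross_path_def is_path_def chain_append intro!: exI[of _ "Inl d1"])
  have c2: "cross_path D E Q ?d0 e (Inl ?d0, map Inl (snd v) @ snd t)"
    using pr c1 Q.prov_eq_T_tgt by (auto simp: cross_path_def)
  have "inst_eq C E R c (tensor_rcp s (Inl ?d0, map Inl (snd u) @ snd t))
      (tensor_rcp s (Inl ?d0, map Inl (snd v) @ snd t))"
    using tensor_rcp_cong_right[OF s c1 c2 pr] .
  then show ?thesis
    using tensor_rcp_shift[OF s(1), of "snd u" t "Inl ?d0"] tensor_rcp_shift[OF s(1), of "snd v" t "Inl ?d0"]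
    by simp
qed

lemma tensor_rcp_cong_left:
  assumes "inst_eq C D P c s s'" "is_path P.T s (Inr d)" "cross_path D E Q d e t"
  shows "inst_eq C E R c (tensor_rcp s t) (tensor_rcp s' t)"
  using assms
proof (induction arbitrary: d e t rule: inst_eq.induct)
  case (ax s s') then show ?case by (rule tensor_rcp_eqs_P)
next
  case (refl s)
  then show ?case using tensor_rcp_cross[OF refl(1) refl(2) refl(3)] by (blast intro: inst_eq.refl)
next
  case (sym s s')
  have "is_path P.T s (Inr d)"
    using P.inst_eq_prov_eq[OF sym(1)] sym(3) P.prov_eq_T_tgt prov_eq.sym by blast
  then show ?case using sym.IH[OF _ sym(4)] by (blast intro: inst_eq.sym)
next
  case (trans s s' s'')
  have "is_path P.T s' (Inr d)" using P.inst_eq_prov_eq[OF trans(1)] trans(5) P.prov_eq_T_tgt by blast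
  then show ?case using trans.IH(1)[OF trans(5,6)] trans.IH(2)[OF _ trans(6)]
    by (blast intro: inst_eq.trans)
next
  case (app s s' d0 g)
  have rs: "rcp C D P c s" "rcp C D P c s'" using P.inst_eq_rcp[OF app(1)] by auto
  have dd: "d = ftgt D g" using app(2,3,4,6) by (auto simp: is_path_def chain_snoc)
  let ?t = "(Inl d0, Inl g # snd t) :: ('sd+'se,'fd+'fq+'fe) path"
  have ct: "cross_path D E Q d0 e ?t"
    using app(3,4,7) dd P.fsrc_sort_D[OF app(3)] by (auto simp: cross_path_def is_path_def)
  have "inst_eq C E R c (tensor_rcp s ?t) (tensor_rcp s' ?t)" using app.IH[OF app(2) ct] .
  then show ?case
    using tensor_rcp_shift[OF rs(1), of "[g]" t "Inl d0"] tensor_rcp_shift[OF rs(2), of "[g]" t "Inl d0"]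
    by (simp add: append_right_def)
next
  case (deq s d0 u v)
  then show ?case using tensor_rcp_eqs_D[of u v c s d e t] by (simp add: append_right_def)
qed

lemma tensor_cong_left:
  assumes s: "cross_path C D P c d s" "cross_path C D P c d s'" and pr: "prov_eq P.T s s'"
    and t: "cross_path D E Q d e t"
  shows "inst_eq C E R c (tensor c s t) (tensor c s' t)"
proof -
  note n1 = P.rcp_of[OF s(1)] and n2 = P.rcp_of[OF s(2)]
  have "prov_eq P.T (P.rcp_of c s) (P.rcp_of c s')" using n1 n2 pr by (meson prov_eq.sym prov_eq.trans)
  then have i: "inst_eq C D P c (P.rcp_of c s) (P.rcp_of c s')"
    using n1 n2 P.conservative_inst_eq by blast
  have "is_path P.T (P.rcp_of c s) (Inr d)" using P.rcp_of_path[OF s(1)] .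
  from tensor_rcp_cong_left[OF i this t] show ?thesis by (simp add: tensor_def)
qed

lemma tensor_cong_right:
  assumes s: "cross_path C D P c d s" and t: "cross_path D E Q d e t" "cross_path D E Q d e t'"
    and pr: "prov_eq Q.T t t'"
  shows "inst_eq C E R c (tensor c s t) (tensor c s t')"
proof -
  note n1 = P.rcp_of[OF s(1)]
  have "is_path P.T (P.rcp_of c s) (Inr d)" using P.rcp_of_path[OF s(1)] .
  from tensor_rcp_cong_right[OF conjunct1[OF n1] this t pr] show ?thesis by (simp add: tensor_def)
qed

lemma tensor_shift:
  assumes s: "cross_path C D P c d s" and g: "is_chain D d g d'" and t: "cross_path D E Q d' e t"
  shows "inst_eq C E R c (tensor c (append_right s g) t) (tensor c s (Inl d, map Inl g @ snd t))"
proof -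
  note n1 = P.rcp_of[OF s(1)]
  have sg: "cross_path C D P c d' (append_right s g)"
  proof -
    have "is_path P.T s (Inr d)" "fst s = Inl c" using s by (auto simp: cross_path_def)
    from P.path_append_right[OF this(1) g] this(2) show ?thesis
      by (simp add: cross_path_def append_right_def)
  qed
  note n2 = P.rcp_of[OF sg]
  have p1: "is_path P.T (P.rcp_of c s) (Inr d)" using P.rcp_of_path[OF s(1)] .
  obtain z where z: "P.rcp_of c s = (Inl c, z)" using rcp_decomp[OF conjunct1[OF n1]] by auto
  have fs: "fst s = Inl c" using s by (auto simp: cross_path_def)
  have "prov_eq P.T (Inl c, snd s) (Inl c, z)" using n1 z fs by (metis prod.collapse)
  from prov_eq_append[OF this, of "Inr d" "map (Inr \<circ> Inr) g" "Inr d'"] s g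
  have "prov_eq P.T (append_right s g) (append_right (P.rcp_of c s) g)"
    by (simp add: append_right_def z fs cross_path_def is_path_def)
  then have "prov_eq P.T (P.rcp_of c (append_right s g)) (append_right (P.rcp_of c s) g)"
    using n2 by (meson prov_eq.sym prov_eq.trans)
  moreover have "rcp C D P c (append_right (P.rcp_of c s) g)"
    using P.rcp_append[OF conjunct1[OF n1] p1 g] .
  ultimately have i: "inst_eq C D P c (P.rcp_of c (append_right s g)) (append_right (P.rcp_of c s) g)"
    using n2 P.conservative_inst_eq by blast
  have "is_path P.T (P.rcp_of c (append_right s g)) (Inr d')" using P.rcp_of_path[OF sg] .
  from tensor_rcp_cong_left[OF i this t]
  have "inst_eq C E R c (tensor_rcp (P.rcp_of c (append_right s g)) t)
      (tensor_rcp (append_right (P.rcp_of c s) g) t)" .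
  then show ?thesis using tensor_rcp_shift[OF conjunct1[OF n1], of g t "Inl d"]
    by (simp add: tensor_def append_right_def)
qed

lemma tensor_eq_tensor_rcp:
  assumes s: "rcp C D P c s" "cross_path C D P c d s" and t: "cross_path D E Q d e t"
  shows "inst_eq C E R c (tensor c s t) (tensor_rcp s t)"
proof -
  have "inst_eq C D P c (P.rcp_of c s) s"
    using P.rcp_of[OF s(2)] s(1) P.conservative_inst_eq prov_eq.sym by blast
  then show ?thesis using tensor_rcp_cong_left P.rcp_of_path[OF s(2)] t by (simp add: tensor_def)
qed

lemma tensor_rcp_generator:
  assumes p: "p \<in> PFuns P" and t: "rcp D E Q (ptgt P p) t" "cross_path D E Q (ptgt P p) e t"
  shows "inst_eq C E R (psrc P p) (tensor_rcp (Inl (psrc P p), [Inr (Inl p)]) t) (pair_path p t)"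
proof -
  have "inst_eq D E Q (ptgt P p) (Q.rcp_of (ptgt P p) t) t"
    using Q.rcp_of[OF t(2)] t(1) Q.conservative_inst_eq prov_eq.sym by blast
  moreover have "(Inl (ptgt P p), snd t) = t" using t(2) by (cases t) (simp add: cross_path_def)
  ultimately show ?thesis using inst_eq_pair_path[OF _ p HOL.refl]
    by (simp add: tensor_rcp_def rcp_tail_def prefix_D_def)
qed

abbreviation "crel c e \<equiv> comp_rel D PP QQ c e"

abbreviation "car c e \<equiv> comp_carrier D PP QQ c e"

abbreviation "cgen c e \<equiv> comp_gen D PP QQ c e"

lemma crel_sym: "(x,y) \<in> crel c e \<Longrightarrow> (y,x) \<in> crel c e"
proof -
  have "sym (Id_on (car c e) \<union> cgen c e \<union> (cgen c e)\<inverse>)" by (auto simp: sym_def)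
  then have "sym (crel c e)" unfolding comp_rel_def by (rule sym_rtrancl)
  then show "(x,y) \<in> crel c e \<Longrightarrow> (y,x) \<in> crel c e" unfolding sym_def by blast
qed

lemma crel_trans: "(x,y) \<in> crel c e \<Longrightarrow> (y,z) \<in> crel c e \<Longrightarrow> (x,z) \<in> crel c e"
  unfolding comp_rel_def by (rule rtrancl_trans)

lemma crel_refl: "(x,x) \<in> crel c e" unfolding comp_rel_def by simp

lemma crel_class: "(x,y) \<in> crel c e \<Longrightarrow> crel c e `` {x} = crel c e `` {y}"
  using crel_sym crel_trans by blast

lemma cgen_crel: "(x,y) \<in> cgen c e \<Longrightarrow> (x,y) \<in> crel c e"
  unfolding comp_rel_def by auto

lemma crel_class_eqD: "crel c e `` {x} = crel c e `` {y} \<Longrightarrow> (x,y) \<in> crel c e"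
  using crel_refl crel_sym by blast

lemma cgen_car:
  assumes "(x,y) \<in> cgen c e"
  shows "x \<in> car c e \<and> y \<in> car c e"
proof -
  obtain d d' g a b where xy: "x = (d, a, act QQ (d,g) (e,[]) b)" "y = (d', act PP (c,[]) (d,g) a, b)"
    and g: "is_chain D d g d'" and a: "a \<in> el PP c d" and b: "b \<in> el QQ d' e"
    using assms by (auto simp: comp_gen_def)
  have pg: "is_path D (d,g) d'" using g by (simp add: is_path_def)
  have pe: "is_path E (e,[]) e" and pc: "is_path C (c,[]) c"
    using profunctor_el_sorts[OF Q.prof b] profunctor_el_sorts[OF P.prof a] by (simp_all add: is_path_def)
  have "act QQ (d,g) (e,[]) b \<in> el QQ d e" using profunctor_act_el[OF Q.prof pg pe] b by simp
  moreover have "act PP (c,[]) (d,g) a \<in> el PP c d'" using profunctor_act_el[OF P.prof pc pg] a by simp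
  moreover have "d \<in> Sorts D" "d' \<in> Sorts D" using g by (auto dest: chain_src chain_tgt_sort)
  ultimately show ?thesis using xy a b by (auto simp: comp_carrier_def)
qed

lemma crel_car:
  assumes "(z,z') \<in> crel c e" "z \<in> car c e"
  shows "z' \<in> car c e"
  using assms(1) unfolding comp_rel_def
  by (induction rule: rtrancl_induct) (use assms(2) cgen_car in auto)

definition act_triple where
  "act_triple u w z = (fst z, act PP u (fst z, []) (fst (snd z)), act QQ (fst z, []) w (snd (snd z)))"

lemma act_triple_car:
  assumes "z \<in> car c e" "is_path C u c" "is_path E w e'" "fst w = e"
  shows "act_triple u w z \<in> car (fst u) e'"
proof -
  obtain d a b where z: "z = (d,a,b)" "d \<in> Sorts D" "a \<in> el PP c d" "b \<in> el QQ d e"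
    using assms(1) by (auto simp: comp_carrier_def)
  have pd: "is_path D (d,[]) d" using z by (simp add: is_path_def)
  have "act PP u (d,[]) a \<in> el PP (fst u) d" using profunctor_act_el[OF P.prof assms(2) pd] z by simp
  moreover have "act QQ (d,[]) w b \<in> el QQ d e'"
    using profunctor_act_el[OF Q.prof pd assms(3)] z assms(4) by simp
  ultimately show ?thesis using z by (auto simp: comp_carrier_def act_triple_def)
qed

lemma act_triple_gen:
  assumes xy: "(x,y) \<in> cgen c e" and u: "is_path C u c" and w: "is_path E w e'" "fst w = e"
  shows "(act_triple u w x, act_triple u w y) \<in> cgen (fst u) e'"
proof -
  obtain d d' g a b where xy': "x = (d, a, act QQ (d,g) (e,[]) b)" "y = (d', act PP (c,[]) (d,g) a, b)"
    "is_chain D d g d'" "a \<in> el PP c d" "b \<in> el QQ d' e"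
    using xy by (auto simp: comp_gen_def)
  have sd: "d \<in> Sorts D" "d' \<in> Sorts D" using xy'(3) by (auto dest: chain_src chain_tgt_sort)
  have se: "e \<in> Sorts E" "c \<in> Sorts C" using profunctor_el_sorts[OF Q.prof xy'(5)]
    profunctor_el_sorts[OF P.prof xy'(4)] by auto
  obtain c' us where uu: "u = (c', us)" "is_chain C c' us c"
    using u by (cases u) (auto simp: is_path_def)
  obtain ws where ww: "w = (e, ws)" "is_chain E e ws e'"
    using w by (cases w) (auto simp: is_path_def)
  let ?a2 = "act PP u (d,[]) a" and ?b2 = "act QQ (d',[]) w b"
  have a2: "?a2 \<in> el PP c' d"
    using profunctor_act_el[OF P.prof u, of "(d,[])" d a] xy' sd uu by (auto simp: is_path_def)
  have b2: "?b2 \<in> el QQ d' e'"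
    using profunctor_act_el[OF Q.prof _ w(1), of "(d',[])" d' b] xy' sd ww by (auto simp: is_path_def)
  have swQ: "act QQ (d,[]) w (act QQ (d,g) (e,[]) b) = act QQ (d,g) (e',[]) ?b2"
    using profunctor_act_interchange[OF Q.prof xy'(3) ww(2) xy'(5)] ww by simp
  have swP: "act PP u (d',[]) (act PP (c,[]) (d,g) a) = act PP (c',[]) (d,g) ?a2"
    using profunctor_act_interchange[OF P.prof uu(2) xy'(3) xy'(4)] uu by simp
  have "act_triple u w x = (d, ?a2, act QQ (d,g) (e',[]) ?b2)"
    using xy'(1) swQ by (simp add: act_triple_def)
  moreover have "act_triple u w y = (d', act PP (fst u,[]) (d,g) ?a2, ?b2)"
    using xy'(2) swP uu by (simp add: act_triple_def)
  ultimately show ?thesis using xy'(3) a2 b2 uu unfolding comp_gen_def by auto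
qed

lemma act_triple_crel:
  assumes xy: "(x,y) \<in> crel c e" and u: "is_path C u c" and w: "is_path E w e'" "fst w = e"
  shows "(act_triple u w x, act_triple u w y) \<in> crel (fst u) e'"
  using xy unfolding comp_rel_def
proof (induction rule: rtrancl_induct)
  case base then show ?case by simp
next
  case (step y z)
  from step(2) consider "y = z" | "(y,z) \<in> cgen c e" | "(z,y) \<in> cgen c e" by auto
  then show ?case
  proof cases
    case 1 then show ?thesis using step(3) by simp
  next
    case 2 then show ?thesis using step(3) act_triple_gen[OF _ u w] cgen_crel unfolding comp_rel_def
      by (meson rtrancl_trans)
  next
    case 3
    then have "(act_triple u w y, act_triple u w z) \<in> crel (fst u) e'"
      using act_triple_gen[OF _ u w] cgen_crel crel_sym by blast
    then show ?thesis using step(3) unfolding comp_rel_def by (meson rtrancl_trans)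
  qed
qed

lemma act_prof_comp:
  assumes z: "z \<in> car c e" and u: "is_path C u c" and w: "is_path E w e'" "fst w = e"
  shows "act (prof_comp C D E PP QQ) u w (crel c e `` {z}) = crel (fst u) e' `` {act_triple u w z}"
proof -
  have pt: "path_tgt E w = e'" using w by (cases w) (auto simp: is_path_def path_tgt_chain)
  have "act (prof_comp C D E PP QQ) u w (crel c e `` {z})
    = (\<Union>x\<in>crel c e `` {z}. crel (fst u) e' `` {act_triple u w x})"
    by (simp add: prof_comp_def pt act_triple_def)
  also have "\<dots> = crel (fst u) e' `` {act_triple u w z}"
  proof
    show "(\<Union>x\<in>crel c e `` {z}. crel (fst u) e' `` {act_triple u w x})
        \<subseteq> crel (fst u) e' `` {act_triple u w z}"
      using act_triple_crel[OF _ u w] crel_class by blast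
    show "crel (fst u) e' `` {act_triple u w z}
        \<subseteq> (\<Union>x\<in>crel c e `` {z}. crel (fst u) e' `` {act_triple u w x})"
      using crel_refl by blast
  qed
  finally show ?thesis .
qed

lemma el_prof_comp: "el (prof_comp C D E PP QQ) c e = (\<lambda>z. crel c e `` {z}) ` car c e"
  by (auto simp: prof_comp_def quotient_def)

subsection \<open>Interpretation of R in the composite profunctor\<close>

text \<open>The interpretation of a cross-path \<open>x.(p,q).h\<close> of R is the class of
  \<open>(d, [x.p], [q.h])\<close> in \<open>\<P> \<odot> \<Q>\<close>.\<close>
definition triple_of :: "'sc \<Rightarrow> 'se \<Rightarrow> ('sc+'se,'fc+nat+'fe) path \<Rightarrow> 'sd \<times> 'a \<times> 'b" where
  "triple_of c e t = (case split_cross (snd t) of (x,i,h) \<Rightarrow>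
     let (p,q) = pairs ! i in
       (ptgt P p, P.elem c (ptgt P p) (Inl c, map Inl x @ [Inr (Inl p)]),
        Q.elem (ptgt P p) e (Inl (ptgt P p), Inr (Inl q) # map (Inr \<circ> Inr) h)))"

definition comp_class where "comp_class c e t = crel c e `` {triple_of c e t}"

lemma triple_of_simp:
  "pairs ! i = (p,q) \<Longrightarrow> triple_of c e (s0, map Inl x @ Inr (Inl i) # map (Inr \<circ> Inr) h) =
    (ptgt P p, P.elem c (ptgt P p) (Inl c, map Inl x @ [Inr (Inl p)]),
     Q.elem (ptgt P p) e (Inl (ptgt P p), Inr (Inl q) # map (Inr \<circ> Inr) h))"
  by (simp add: triple_of_def)

lemma cross_path_R_decomp:
  assumes "cross_path C E R c e t"
  shows "\<exists>x i h p q. t = (Inl c, map Inl x @ Inr (Inl i) # map (Inr \<circ> Inr) h) \<and> i < length pairs \<and>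
     pairs ! i = (p,q) \<and> is_chain C c x (psrc P p) \<and> is_chain E (ptgt Q q) h e \<and>
     p \<in> PFuns P \<and> q \<in> PFuns Q \<and> ptgt P p = psrc Q q"
proof -
  obtain x i h where t: "t = (Inl c, map Inl x @ Inr (Inl i) # map (Inr \<circ> Inr) h)"
    "is_chain C c x (psrc R i)" "i \<in> PFuns R" "is_chain E (ptgt R i) h e"
    using assms by (cases t) (auto simp: cross_path_def is_path_def chain_total_X)
  obtain p q where pq: "pairs ! i = (p,q)" by fastforce
  have il: "i < length pairs" using t(3) by simp
  have "(p,q) \<in> composable" using composable_nth[of i] t(3) pq by simp
  then have S: "p \<in> PFuns P" "q \<in> PFuns Q" "ptgt P p = psrc Q q" by (auto simp: composable_def)
  have c2: "is_chain C c x (psrc P p)" using t(2) pq by simp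
  have c4: "is_chain E (ptgt Q q) h e" using t(4) pq by simp
  show ?thesis using t(1) il pq c2 c4 S by blast
qed

lemma cross_path_P_sym:
  assumes "is_chain C c x (psrc P p)" "p \<in> PFuns P"
  shows "cross_path C D P c (ptgt P p) (Inl c, map Inl x @ [Inr (Inl p)])"
proof -
  have "is_chain P.T (Inl c) (map Inl x @ Inr (Inl p) # map (Inr \<circ> Inr) []) (Inr (ptgt P p))"
    unfolding chain_total_X
    by (rule exI[of _ x], rule exI[of _ p], rule exI[of _ "[]"]) (use assms P.ptgt_sort in auto)
  then show ?thesis by (simp add: cross_path_def is_path_def)
qed

lemma cross_path_Q_sym:
  "is_chain E (ptgt Q q) h e \<Longrightarrow> q \<in> PFuns Q \<Longrightarrow>
    cross_path D E Q (psrc Q q) e (Inl (psrc Q q), Inr (Inl q) # map (Inr \<circ> Inr) h)"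
  using Q.psrc_sort by (auto simp: cross_path_def is_path_def)

lemma triple_of_car:
  assumes "cross_path C E R c e t"
  shows "triple_of c e t \<in> car c e"
proof -
  from cross_path_R_decomp[OF assms] obtain x i h p q where a:
    "t = (Inl c, map Inl x @ Inr (Inl i) # map (Inr \<circ> Inr) h)" "pairs ! i = (p,q)"
    "is_chain C c x (psrc P p)" "is_chain E (ptgt Q q) h e" "p \<in> PFuns P" "q \<in> PFuns Q"
    "ptgt P p = psrc Q q" by blast
  have "P.elem c (ptgt P p) (Inl c, map Inl x @ [Inr (Inl p)]) \<in> el PP c (ptgt P p)"
    using P.elem_in[OF cross_path_P_sym[OF a(3,5)]] by blast
  moreover have "Q.elem (ptgt P p) e (Inl (ptgt P p), Inr (Inl q) # map (Inr \<circ> Inr) h)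
      \<in> el QQ (ptgt P p) e"
    using Q.elem_in[OF cross_path_Q_sym[OF a(4,6)]] a(7) by simp
  ultimately show ?thesis
    using a(1,2) P.ptgt_sort[OF a(5)] by (simp add: triple_of_simp comp_carrier_def)
qed

lemma comp_class_whisker:
  assumes r: "cross_path C E R c e r" and u: "is_path C u c" and w: "is_path E w e'" "fst w = e"
  shows "comp_class (fst u) e' (whisker u r w) = act (prof_comp C D E PP QQ) u w (comp_class c e r)"
proof -
  from cross_path_R_decomp[OF r] obtain x i h p q where a:
    "r = (Inl c, map Inl x @ Inr (Inl i) # map (Inr \<circ> Inr) h)" "pairs ! i = (p,q)"
    "is_chain C c x (psrc P p)" "is_chain E (ptgt Q q) h e" "p \<in> PFuns P" "q \<in> PFuns Q"
    "ptgt P p = psrc Q q" by blast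
  let ?d = "ptgt P p"
  let ?sp = "(Inl c, map Inl x @ [Inr (Inl p)]) :: ('sc+'sd,'fc+'fp+'fd) path"
  let ?tq = "(Inl ?d, Inr (Inl q) # map (Inr \<circ> Inr) h) :: ('sd+'se,'fd+'fq+'fe) path"
  have sp: "cross_path C D P c ?d ?sp" using cross_path_P_sym[OF a(3,5)] .
  have tq: "cross_path D E Q ?d e ?tq" using cross_path_Q_sym[OF a(4,6)] a(7) by simp
  have pd: "is_path D (?d,[]) ?d" using P.ptgt_sort[OF a(5)] by (simp add: is_path_def)
  have ruw: "whisker u r w =
      (Inl (fst u), map Inl (snd u @ x) @ Inr (Inl i) # map (Inr \<circ> Inr) (h @ snd w))"
    using a(1) by (simp add: whisker_def)
  have "triple_of (fst u) e' (whisker u r w) =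
      (?d, P.elem (fst u) ?d (Inl (fst u), map Inl (snd u @ x) @ [Inr (Inl p)]),
       Q.elem ?d e' (Inl ?d, Inr (Inl q) # map (Inr \<circ> Inr) (h @ snd w)))"
    unfolding ruw by (rule triple_of_simp[OF a(2)])
  also have "\<dots> = act_triple u w (triple_of c e r)"
    using P.elem_whisker[OF u pd, of ?sp] Q.elem_whisker[OF pd w(1), of ?tq] sp tq w(2)
    by (simp add: a(1) triple_of_simp[OF a(2)] act_triple_def whisker_def)
  finally show ?thesis using act_prof_comp[OF triple_of_car[OF r] u w] by (simp add: comp_class_def)
qed

lemma comp_class_pair_path:
  assumes r: "rcp D E Q d r" and p: "p \<in> PFuns P" "ptgt P p = d"
  shows "comp_class (psrc P p) e (pair_path p r)
    = crel (psrc P p) e `` {(d, P.elem (psrc P p) d (Inl (psrc P p), [Inr (Inl p)]), Q.elem d e r)}"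
proof -
  have q: "rcp_sym r \<in> PFuns Q" "psrc Q (rcp_sym r) = d"
    "r = (Inl d, Inr (Inl (rcp_sym r)) # map (Inr \<circ> Inr) (rcp_tail r))"
    using rcp_decomp[OF r] by auto
  have "(p, rcp_sym r) \<in> composable" using p q by (auto simp: composable_def)
  note i = pair_index[OF this]
  have "pair_path p r =
      (Inl (psrc P p), map Inl [] @ Inr (Inl (pair_index (p, rcp_sym r))) # map (Inr \<circ> Inr) (rcp_tail r))"
    by (simp add: pair_path_def)
  then show ?thesis
    using triple_of_simp[OF conjunct2[OF i], of "psrc P p" e _ "[]"] p q(3)[symmetric]
    by (simp add: comp_class_def)
qed

text \<open>The generating relation \<open>(p, g.[t]) \<sim> ([p.g], [t])\<close> of the coend identifies the
  interpretation of \<open>tensor_rcp (p.g) t\<close> with the class of \<open>([p.g], [t])\<close>.\<close>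
lemma comp_class_tensor_rcp:
  assumes r: "rcp C D P c r" "is_path P.T r (Inr d)" and t: "cross_path D E Q d e t"
  shows "comp_class c e (tensor_rcp r t) = crel c e `` {(d, P.elem c d r, Q.elem d e t)}"
proof -
  let ?p = "rcp_sym r" and ?g = "rcp_tail r"
  let ?dp = "ptgt P ?p" and ?y = "prefix_D (rcp_sym r) (rcp_tail r) t"
  let ?a = "P.elem c ?dp (Inl c, [Inr (Inl ?p)])"
  have rr: "r = (Inl c, Inr (Inl ?p) # map (Inr \<circ> Inr) ?g)" "?p \<in> PFuns P" "psrc P ?p = c"
    using rcp_decomp[OF r(1)] by auto
  have pg: "is_path D (?dp, ?g) d" using P.rcp_path_iff[OF r(1)] r(2) by (simp add: is_path_def)
  have pe: "is_path E (e,[]) e" using t Q.cross_path_sorts by (simp add: is_path_def)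
  have pc: "is_path C (c,[]) c" using P.psrc_sort[OF rr(2)] rr(3) by (simp add: is_path_def)
  have y: "cross_path D E Q ?dp e ?y" using cross_path_prefix_D[OF r t] .
  have sp: "cross_path C D P c ?dp (Inl c, [Inr (Inl ?p)])"
    using cross_path_P_sym[of c "[]" ?p] rr pc by (simp add: is_path_def)
  have "comp_class c e (tensor_rcp r t) = crel c e `` {(?dp, ?a, Q.elem ?dp e (Q.rcp_of ?dp ?y))}"
    using comp_class_pair_path[OF conjunct1[OF Q.rcp_of[OF y]] rr(2) HOL.refl] rr(3)
    by (simp add: tensor_rcp_def)
  also have "Q.elem ?dp e (Q.rcp_of ?dp ?y) = Q.elem ?dp e (whisker (?dp, ?g) t (e,[]))"
    using Q.elem_prov_eq[OF prov_eq.sym[OF conjunct2[OF Q.rcp_of[OF y]]]]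
    by (simp add: prefix_D_def whisker_def)
  also have "\<dots> = act QQ (?dp, ?g) (e,[]) (Q.elem d e t)" using Q.elem_whisker[OF pg pe] t by simp
  also have "crel c e `` {(?dp, ?a, act QQ (?dp, ?g) (e,[]) (Q.elem d e t))}
      = crel c e `` {(d, act PP (c,[]) (?dp, ?g) ?a, Q.elem d e t)}"
    using P.elem_in[OF sp] Q.elem_in[OF t] pg
    by (intro crel_class cgen_crel) (auto simp: comp_gen_def is_path_def)
  also have "act PP (c,[]) (?dp, ?g) ?a = P.elem c d r"
    using P.elem_whisker[OF pc pg, of "(Inl c, [Inr (Inl ?p)])"] sp rr(1)[symmetric]
    by (simp add: whisker_def)
  finally show ?thesis .
qed

lemma comp_class_tensor:
  assumes s: "cross_path C D P c d s" and t: "cross_path D E Q d e t"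
  shows "comp_class c e (tensor c s t) = crel c e `` {(d, P.elem c d s, Q.elem d e t)}"
  using comp_class_tensor_rcp[OF conjunct1[OF P.rcp_of[OF s]] P.rcp_of_path[OF s] t]
    P.elem_prov_eq[OF conjunct2[OF P.rcp_of[OF s]]]
  by (simp add: tensor_def)

definition proj_C :: "('sc+'se, 'fc+nat+'fe) path \<Rightarrow> ('sc,'fc) path" where
  "proj_C a = (projl (fst a), map projl (snd a))"

definition proj_E :: "('sc+'se, 'fc+nat+'fe) path \<Rightarrow> ('se,'fe) path" where
  "proj_E a = (projr (fst a), map (projr \<circ> projr) (snd a))"

lemma proj_C_simp[simp]: "proj_C (Inl c, map Inl x) = (c, x)" by (simp add: proj_C_def o_def)

lemma proj_E_simp[simp]: "proj_E (Inr e, map (Inr \<circ> Inr) h) = (e, h)"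
  by (simp add: proj_E_def o_def)

lemma R_path_from_C:
  "is_path R.T (Inl c, xs) t \<Longrightarrow>
    (\<exists>c' x. t = Inl c' \<and> xs = map Inl x \<and> is_chain C c x c') \<or>
    (\<exists>e. t = Inr e \<and> cross_path C E R c e (Inl c, xs))"
  by (cases t) (auto simp: is_path_def chain_total_L cross_path_def)

lemma R_path_from_E:
  "is_path R.T (Inr e, xs) t \<Longrightarrow> \<exists>h e'. t = Inr e' \<and> xs = map (Inr \<circ> Inr) h \<and> is_chain E e h e'"
  by (auto simp: is_path_def chain_total_R)

lemma R_prov_eq_tgt: "prov_eq R.T a b \<Longrightarrow> is_path R.T b t \<Longrightarrow> is_path R.T a t \<and> fst a = fst b"
  using R.prov_eq_T_tgt prov_eq.sym by metis

lemma cross_path_R_unique: "cross_path C E R c e a \<Longrightarrow> cross_path C E R c' e' a \<Longrightarrow> c' = c \<and> e' = e"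
  unfolding cross_path_def is_path_def by (auto dest: chain_tgt_unique)

lemma comp_class_eqs_P:
  assumes "(a,b) \<in> eqs_P" and a: "cross_path C E R c e a"
  shows "comp_class c e a = comp_class c e b"
proof -
  obtain s s' q c0 where ab: "a = tensor_rcp s (sym_path q)" "b = tensor_rcp s' (sym_path q)"
    and ss': "(s,s') \<in> PEqs P" and q: "q \<in> PFuns Q"
    and s: "rcp C D P c0 s" "rcp C D P c0 s'" "is_path P.T s (Inr (psrc Q q))"
    using assms(1) unfolding eqs_P_def by auto
  have "prov_eq P.T s s'" by (rule prov_eq.ax) (use ss' in \<open>auto simp: total_def\<close>)
  moreover from this have s'q: "is_path P.T s' (Inr (psrc Q q))" using P.prov_eq_T_tgt s(3) by blast
  moreover note qc = cross_path_sym_path[OF q]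
  moreover have "c0 = c" "ptgt Q q = e"
    using cross_path_R_unique[OF a] tensor_rcp_cross[OF s(1,3) qc] ab(1) by auto
  ultimately show ?thesis
    using comp_class_tensor_rcp[OF s(1,3) qc] comp_class_tensor_rcp[OF s(2) s'q qc] ab P.elem_prov_eq
    by simp
qed

lemma comp_class_eqs_Q:
  assumes "(a,b) \<in> eqs_Q" and a: "cross_path C E R c e a"
  shows "comp_class c e a = comp_class c e b"
proof -
  obtain t t' p where ab: "a = pair_path p t" "b = pair_path p t'" and tt': "(t,t') \<in> PEqs Q"
    and p: "p \<in> PFuns P" and t: "rcp D E Q (ptgt P p) t" "rcp D E Q (ptgt P p) t'"
    using assms(1) unfolding eqs_Q_def by auto
  have "prov_eq Q.T t t'" by (rule prov_eq.ax) (use tt' in \<open>auto simp: total_def\<close>)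
  moreover obtain e0 where "is_path Q.T t (Inr e0)" using Q.rcp_is_path[OF t(1)] by blast
  then have "psrc P p = c" using cross_path_R_unique[OF a] pair_path_cross[OF t(1) _ p] ab(1) by blast
  ultimately show ?thesis
    using comp_class_pair_path[OF t(1) p] comp_class_pair_path[OF t(2) p] ab Q.elem_prov_eq by simp
qed

lemma comp_class_eqs_nongen:
  assumes "(a,b) \<in> eqs_nongen" and a: "cross_path C E R c e a"
  shows "comp_class c e a = comp_class c e b"
proof -
  obtain f i where ab: "a = (Inl (fsrc C f), [Inl f, Inr (Inl i)])"
    "b = tensor_rcp (P.rcp_of (fsrc C f) (Inl (fsrc C f), [Inl f, Inr (Inl (fst (pairs ! i)))]))
      (sym_path (snd (pairs ! i)))"
    and f: "f \<in> Funs C" "ftgt C f = psrc P (fst (pairs ! i))" and i: "i < length pairs"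
    using assms(1) unfolding eqs_nongen_def by auto
  obtain p q where pq: "pairs ! i = (p,q)" by fastforce
  have S: "p \<in> PFuns P" "q \<in> PFuns Q" "ptgt P p = psrc Q q"
    using composable_nth[OF i] pq by (auto simp: composable_def)
  have ce: "fsrc C f = c" "ptgt Q q = e"
    using a ab(1) pq Q.ptgt_sort S(2) unfolding cross_path_def is_path_def by (auto dest: chain_tgt_unique)
  have fp: "cross_path C D P c (ptgt P p) (Inl c, map Inl [f] @ [Inr (Inl p)])"
    using cross_path_P_sym[of c "[f]" p] f pq S ce P.wfC by (auto simp: catpres_wf_def)
  have qc: "cross_path D E Q (ptgt P p) (ptgt Q q) (sym_path q)"
    using cross_path_sym_path[OF S(2)] S(3) by simp
  have "comp_class c e b = crel c e ``
      {(ptgt P p, P.elem c (ptgt P p) (Inl c, [Inl f, Inr (Inl p)]), Q.elem (ptgt P p) e (sym_path q))}"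
    using comp_class_tensor[OF fp qc] ab(2) pq ce by (simp add: tensor_def)
  also have "\<dots> = comp_class c e a"
    using triple_of_simp[OF pq, of c e "Inl c" "[f]" "[]"] ab(1) ce S(3)
    by (simp add: comp_class_def sym_path_def)
  finally show ?thesis ..
qed

lemma comp_class_R_eqs:
  assumes "(a,b) \<in> PEqs R"
  shows "\<exists>c e. cross_path C E R c e a \<and> cross_path C E R c e b \<and> comp_class c e a = comp_class c e b"
proof -
  obtain c e where "cross_path C E R c e a" "cross_path C E R c e b"
    using wf_R assms unfolding profpres_wf_def by blast
  moreover have "comp_class c e a = comp_class c e b"
    using assms comp_class_eqs_P[OF _ calculation(1)] comp_class_eqs_Q[OF _ calculation(1)]
      comp_class_eqs_nongen[OF _ calculation(1)]
    unfolding R_simps by blast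
  ultimately show ?thesis by blast
qed

text \<open>Equality of the interpretations of two paths of |R| in the category
  with fibres C and E over \<open>\<zero>\<close> and \<open>\<one>\<close> whose cross-morphisms are the elements of
  \<open>\<P> \<odot> \<Q>\<close>; soundness of this interpretation is what makes R conservative.\<close>
definition interp_eq :: "('sc+'se,'fc+nat+'fe) path \<Rightarrow> ('sc+'se,'fc+nat+'fe) path \<Rightarrow> bool" where
  "interp_eq a b \<longleftrightarrow>
     (\<forall>c c'. fst a = Inl c \<longrightarrow> is_path R.T a (Inl c') \<longrightarrow> prov_eq C (proj_C a) (proj_C b)) \<and>
     (\<forall>e e'. fst a = Inr e \<longrightarrow> is_path R.T a (Inr e') \<longrightarrow> prov_eq E (proj_E a) (proj_E b)) \<and>
     (\<forall>c e. fst a = Inl c \<longrightarrow> is_path R.T a (Inr e) \<longrightarrow> comp_class c e a = comp_class c e b)"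

lemma interp_eq_C_pathI:
  "prov_eq C (c,x) (c,y) \<Longrightarrow> interp_eq (Inl c, map Inl x) (Inl c, map Inl y)"
  unfolding interp_eq_def is_path_def by (auto dest: chain_total_map_Inl)

lemma interp_eq_E_pathI:
  "prov_eq E (e,h) (e,h') \<Longrightarrow> interp_eq (Inr e, map (Inr \<circ> Inr) h) (Inr e, map (Inr \<circ> Inr) h')"
  unfolding interp_eq_def by simp

lemma interp_eq_cross_pathI:
  "cross_path C E R c e a \<Longrightarrow> comp_class c e a = comp_class c e b \<Longrightarrow> interp_eq a b"
  unfolding interp_eq_def cross_path_def is_path_def by (auto dest: chain_tgt_unique)

lemma interp_eq_refl: "is_path R.T a t \<Longrightarrow> interp_eq a a"
  unfolding interp_eq_def
proof (intro conjI allI impI)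
  fix c c' assume "fst a = Inl c" "is_path R.T a (Inl c')"
  then obtain x where "a = (Inl c, map Inl x)" "is_chain C c x c'"
    using R_path_from_C[of c "snd a"] by (cases a) auto
  then show "prov_eq C (proj_C a) (proj_C a)" by (auto intro: prov_eq.refl simp: is_path_def)
next
  fix e e' assume "fst a = Inr e" "is_path R.T a (Inr e')"
  then obtain h where "a = (Inr e, map (Inr \<circ> Inr) h)" "is_chain E e h e'"
    using R_path_from_E[of e "snd a"] by (cases a) auto
  then show "prov_eq E (proj_E a) (proj_E a)" by (auto intro: prov_eq.refl simp: is_path_def)
qed simp

lemma interp_eq_sym:
  assumes "prov_eq R.T a b" "interp_eq a b"
  shows "interp_eq b a"
  unfolding interp_eq_def
proof (intro conjI allI impI)
  fix c c' assume "fst b = Inl c" "is_path R.T b (Inl c')"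
  then show "prov_eq C (proj_C b) (proj_C a)"
    using assms R_prov_eq_tgt[OF assms(1)] unfolding interp_eq_def by (metis prov_eq.sym)
next
  fix e e' assume "fst b = Inr e" "is_path R.T b (Inr e')"
  then show "prov_eq E (proj_E b) (proj_E a)"
    using assms R_prov_eq_tgt[OF assms(1)] unfolding interp_eq_def by (metis prov_eq.sym)
next
  fix c e assume "fst b = Inl c" "is_path R.T b (Inr e)"
  then show "comp_class c e b = comp_class c e a"
    using assms R_prov_eq_tgt[OF assms(1)] unfolding interp_eq_def by metis
qed

lemma interp_eq_trans:
  assumes ab: "prov_eq R.T a b" and "interp_eq a b" "interp_eq b w"
  shows "interp_eq a w"
  unfolding interp_eq_def
proof (intro conjI allI impI)
  fix c c' assume "fst a = Inl c" "is_path R.T a (Inl c')"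
  then show "prov_eq C (proj_C a) (proj_C w)"
    using assms R.prov_eq_T_tgt[OF ab] unfolding interp_eq_def by (metis prov_eq.trans)
next
  fix e e' assume "fst a = Inr e" "is_path R.T a (Inr e')"
  then show "prov_eq E (proj_E a) (proj_E w)"
    using assms R.prov_eq_T_tgt[OF ab] unfolding interp_eq_def by (metis prov_eq.trans)
next
  fix c e assume "fst a = Inl c" "is_path R.T a (Inr e)"
  then show "comp_class c e a = comp_class c e w"
    using assms R.prov_eq_T_tgt[OF ab] unfolding interp_eq_def by metis
qed

lemma interp_eq_axiom:
  assumes "(a,b) \<in> Eqs R.T"
  shows "interp_eq a b"
proof -
  consider u v where "a = emb_l u" "b = emb_l v" "(u,v) \<in> Eqs C" | "(a,b) \<in> PEqs R"
    | u v where "a = emb_r u" "b = emb_r v" "(u,v) \<in> Eqs E"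
    using assms by (auto simp: total_def)
  then show ?thesis
  proof cases
    case (1 u v)
    then obtain c x y where "u = (c,x)" "v = (c,y)"
      using P.wfC by (cases u, cases v) (auto simp: catpres_wf_def)
    with 1 show ?thesis using interp_eq_C_pathI[of c x y] prov_eq.ax[of "(c,x)" "(c,y)"]
      by (simp add: emb_l_def)
  next
    case 2 then show ?thesis using comp_class_R_eqs interp_eq_cross_pathI by blast
  next
    case (3 u v)
    then obtain e h h' where "u = (e,h)" "v = (e,h')"
      using Q.wfD by (cases u, cases v) (auto simp: catpres_wf_def)
    with 3 show ?thesis using interp_eq_E_pathI[of e h h'] prov_eq.ax[of "(e,h)" "(e,h')"]
      by (simp add: emb_r_def)
  qed
qed

lemma interp_eq_snoc_C:
  assumes eq: "interp_eq (s,u) (s,v)" and f: "f \<in> Funs C"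
    and u: "is_path R.T (s,u) (Inl (fsrc C f))" and v: "is_path R.T (s,v) (Inl (fsrc C f))"
  shows "interp_eq (s, u @ [Inl f]) (s, v @ [Inl f])"
proof -
  obtain c where c: "s = Inl c" using u R_path_from_E by (cases s) fastforce+
  obtain x y where x: "u = map Inl x" "is_chain C c x (fsrc C f)" and y: "v = map Inl y"
    using R_path_from_C[of c u] R_path_from_C[of c v] u v c by fastforce
  have "prov_eq C (c,x) (c,y)" using eq u c x y unfolding interp_eq_def by auto
  then have "prov_eq C (c, x @ [f]) (c, y @ [f])"
    using prov_eq.post[of C c x c y "fsrc C f" f] f x(2) by (simp add: is_path_def)
  then show ?thesis using interp_eq_C_pathI[of c "x @ [f]" "y @ [f]"] c x y by simp
qed

lemma interp_eq_snoc_pair: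
  assumes eq: "interp_eq (s,u) (s,v)" and i: "i < length pairs"
    and u: "is_path R.T (s,u) (Inl (psrc R i))" and v: "is_path R.T (s,v) (Inl (psrc R i))"
  shows "interp_eq (s, u @ [Inr (Inl i)]) (s, v @ [Inr (Inl i)])"
proof -
  obtain p q where pq: "pairs ! i = (p,q)" by fastforce
  have S: "p \<in> PFuns P" "q \<in> PFuns Q" "ptgt P p = psrc Q q"
    using composable_nth[OF i] pq by (auto simp: composable_def)
  obtain c where c: "s = Inl c" using u R_path_from_E by (cases s) fastforce+
  obtain x y where x: "u = map Inl x" "is_chain C c x (psrc P p)" and y: "v = map Inl y"
    using R_path_from_C[of c u] R_path_from_C[of c v] u v c pq by fastforce
  have "prov_eq C (c,x) (c,y)" using eq u c x y unfolding interp_eq_def by auto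
  then have "prov_eq P.T (Inl c, map Inl x) (Inl c, map Inl y)"
    using prov_eq_emb_l by (fastforce simp: emb_l_def)
  then have "prov_eq P.T (Inl c, map Inl x @ [Inr (Inl p)]) (Inl c, map Inl y @ [Inr (Inl p)])"
    using prov_eq.post[of P.T _ _ _ _ "Inl (psrc P p)" "Inr (Inl p)"] x S by (simp add: is_path_def)
  then have "comp_class c e (s, u @ [Inr (Inl i)]) = comp_class c e (s, v @ [Inr (Inl i)])" for e
    using c x y P.elem_prov_eq
    by (simp add: comp_class_def triple_of_simp[OF pq, where h="[]", simplified])
  moreover have "cross_path C E R c (ptgt Q q) (s, u @ [Inr (Inl i)])"
    using u c i pq Q.ptgt_sort[OF S(2)] by (simp add: cross_path_def is_path_def chain_snoc)
  ultimately show ?thesis using interp_eq_cross_pathI by blast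
qed

lemma interp_eq_snoc_E:
  assumes eq: "interp_eq (s,u) (s,v)" and f: "f \<in> Funs E"
    and u: "is_path R.T (s,u) (Inr (fsrc E f))" and v: "is_path R.T (s,v) (Inr (fsrc E f))"
  shows "interp_eq (s, u @ [Inr (Inr f)]) (s, v @ [Inr (Inr f)])"
proof (cases s)
  case (Inr e)
  obtain h h' where h: "u = map (Inr \<circ> Inr) h" "is_chain E e h (fsrc E f)"
    and h': "v = map (Inr \<circ> Inr) h'"
    using R_path_from_E[of e u] R_path_from_E[of e v] u v Inr by fastforce
  have "prov_eq E (e,h) (e,h')" using eq u Inr h h' unfolding interp_eq_def by auto
  then have "prov_eq E (e, h @ [f]) (e, h' @ [f])"
    using prov_eq.post[of E e h e h' "fsrc E f" f] f h(2) by (simp add: is_path_def)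
  then show ?thesis using interp_eq_E_pathI[of e "h @ [f]" "h' @ [f]"] Inr h h' by simp
next
  case (Inl c)
  have cu: "cross_path C E R c (fsrc E f) (s,u)" and cv: "cross_path C E R c (fsrc E f) (s,v)"
    using u v Inl by (simp_all add: cross_path_def)
  have pc: "is_path C (c,[]) c" using R.cross_path_sorts[OF cu] by (simp add: is_path_def)
  have pf: "is_path E (fsrc E f, [f]) (ftgt E f)" using f Q.wfD
    by (simp add: is_path_def catpres_wf_def)
  have "comp_class c (fsrc E f) (s,u) = comp_class c (fsrc E f) (s,v)"
    using eq u Inl unfolding interp_eq_def by auto
  then have "comp_class c (ftgt E f) (s, u @ [Inr (Inr f)])
    = comp_class c (ftgt E f) (s, v @ [Inr (Inr f)])"
    using comp_class_whisker[OF cu pc pf] comp_class_whisker[OF cv pc pf] Inl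
      by (simp add: whisker_def)
  then show ?thesis using interp_eq_cross_pathI R.cross_path_whisker[OF pc pf] cu Inl
    by (fastforce simp: whisker_def)
qed

lemma interp_eq_snoc:
  assumes "interp_eq (s,u) (s,v)" "is_path R.T (s,u) t" "is_path R.T (s,v) t"
    and "f \<in> Funs R.T" "fsrc R.T f = t"
  shows "interp_eq (s, u @ [f]) (s, v @ [f])"
proof (cases f rule: sum3_cases)
  case (left f0) then show ?thesis using assms interp_eq_snoc_C[of s u v f0] by simp
next
  case (middle i) then show ?thesis using assms interp_eq_snoc_pair[of s u v i] by simp
next
  case (right f0) then show ?thesis using assms interp_eq_snoc_E[of s u v f0] by simp
qed

lemma interp_eq_cons_C:
  assumes eq: "interp_eq (Inl (ftgt C g), u) (Inl (ftgt C g), v)" and g: "g \<in> Funs C"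
    and u: "is_path R.T (Inl (ftgt C g), u) t" and v: "is_path R.T (Inl (ftgt C g), v) t"
  shows "interp_eq (Inl (fsrc C g), Inl g # u) (Inl (fsrc C g), Inl g # v)"
  using R_path_from_C[OF u]
proof
  assume "\<exists>c' x. t = Inl c' \<and> u = map Inl x \<and> is_chain C (ftgt C g) x c'"
  then obtain c' x y where x: "t = Inl c'" "u = map Inl x" "is_chain C (ftgt C g) x c'"
    and y: "v = map Inl y"
    using R_path_from_C[OF v] by auto
  have "prov_eq C (ftgt C g, x) (ftgt C g, y)" using eq u x y unfolding interp_eq_def by auto
  then have "prov_eq C (fsrc C g, g # x) (fsrc C g, g # y)" using prov_eq.pre g by fastforce
  then show ?thesis using interp_eq_C_pathI[of "fsrc C g" "g # x" "g # y"] x y by simp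
next
  assume "\<exists>e. t = Inr e \<and> cross_path C E R (ftgt C g) e (Inl (ftgt C g), u)"
  then obtain e where e: "t = Inr e" and cu: "cross_path C E R (ftgt C g) e (Inl (ftgt C g), u)"
    by blast
  have cv: "cross_path C E R (ftgt C g) e (Inl (ftgt C g), v)"
    using v e by (simp add: cross_path_def)
  have pg: "is_path C (fsrc C g, [g]) (ftgt C g)" using g P.wfC
    by (simp add: is_path_def catpres_wf_def)
  have pe: "is_path E (e, []) e" using R.cross_path_sorts[OF cu] by (simp add: is_path_def)
  have "comp_class (ftgt C g) e (Inl (ftgt C g), u) = comp_class (ftgt C g) e (Inl (ftgt C g), v)"
    using eq u e unfolding interp_eq_def by auto
  then have "comp_class (fsrc C g) e (Inl (fsrc C g), Inl g # u)
    = comp_class (fsrc C g) e (Inl (fsrc C g), Inl g # v)"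
    using comp_class_whisker[OF cu pg pe] comp_class_whisker[OF cv pg pe] by (simp add: whisker_def)
  then show ?thesis using interp_eq_cross_pathI R.cross_path_whisker[OF pg pe] cu
    by (fastforce simp: whisker_def)
qed

lemma interp_eq_cons_pair:
  assumes eq: "interp_eq (Inr (ptgt R i), u) (Inr (ptgt R i), v)" and i: "i < length pairs"
    and u: "is_path R.T (Inr (ptgt R i), u) t" and v: "is_path R.T (Inr (ptgt R i), v) t"
  shows "interp_eq (Inl (psrc R i), Inr (Inl i) # u) (Inl (psrc R i), Inr (Inl i) # v)"
proof -
  obtain p q where pq: "pairs ! i = (p,q)" by fastforce
  have S: "p \<in> PFuns P" "q \<in> PFuns Q" "ptgt P p = psrc Q q"
    using composable_nth[OF i] pq by (auto simp: composable_def)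
  obtain h h' e where h: "t = Inr e" "u = map (Inr \<circ> Inr) h" "is_chain E (ptgt Q q) h e"
    and h': "v = map (Inr \<circ> Inr) h'"
    using R_path_from_E[OF u] R_path_from_E[OF v] pq by fastforce
  have "prov_eq E (ptgt Q q, h) (ptgt Q q, h')" using eq u h h' pq unfolding interp_eq_def by auto
  then have "prov_eq Q.T (Inr (ptgt Q q), map (Inr \<circ> Inr) h) (Inr (ptgt Q q), map (Inr \<circ> Inr) h')"
    using prov_eq_emb_r by (fastforce simp: emb_r_def)
  then have "prov_eq Q.T (Inl (ptgt P p), Inr (Inl q) # map (Inr \<circ> Inr) h)
      (Inl (ptgt P p), Inr (Inl q) # map (Inr \<circ> Inr) h')"
    using prov_eq.pre[of Q.T _ _ _ _ "Inr (Inl q)"] S by simp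
  then have "comp_class c e' (Inl (psrc R i), Inr (Inl i) # u)
    = comp_class c e' (Inl (psrc R i), Inr (Inl i) # v)" for c e'
    using h h' Q.elem_prov_eq
    by (simp add: comp_class_def triple_of_simp[OF pq, where x="[]", simplified])
  moreover have "cross_path C E R (psrc R i) e (Inl (psrc R i), Inr (Inl i) # u)"
    using u h i pq P.psrc_sort[OF S(1)] by (simp add: cross_path_def is_path_def)
  ultimately show ?thesis using interp_eq_cross_pathI by blast
qed

lemma interp_eq_cons_E:
  assumes eq: "interp_eq (Inr (ftgt E g), u) (Inr (ftgt E g), v)" and g: "g \<in> Funs E"
    and u: "is_path R.T (Inr (ftgt E g), u) t" and v: "is_path R.T (Inr (ftgt E g), v) t"
  shows "interp_eq (Inr (fsrc E g), Inr (Inr g) # u) (Inr (fsrc E g), Inr (Inr g) # v)"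
proof -
  obtain h h' e where h: "t = Inr e" "u = map (Inr \<circ> Inr) h" "is_chain E (ftgt E g) h e"
    and h': "v = map (Inr \<circ> Inr) h'"
    using R_path_from_E[OF u] R_path_from_E[OF v] by fastforce
  have "prov_eq E (ftgt E g, h) (ftgt E g, h')" using eq u h h' unfolding interp_eq_def by auto
  then have "prov_eq E (fsrc E g, g # h) (fsrc E g, g # h')" using prov_eq.pre g by fastforce
  then show ?thesis using interp_eq_E_pathI[of "fsrc E g" "g # h" "g # h'"] h h' by simp
qed

lemma interp_eq_cons:
  assumes "interp_eq (s,u) (s,v)" "is_path R.T (s,u) t" "is_path R.T (s,v) t"
    and "g \<in> Funs R.T" "ftgt R.T g = s"
  shows "interp_eq (fsrc R.T g, g # u) (fsrc R.T g, g # v)"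
proof (cases g rule: sum3_cases)
  case (left g0) then show ?thesis using assms interp_eq_cons_C[of g0 u v t] by auto
next
  case (middle i) then show ?thesis using assms interp_eq_cons_pair[of i u v t] by auto
next
  case (right g0) then show ?thesis using assms interp_eq_cons_E[of g0 u v t] by auto
qed

lemma prov_eq_interp_eq: "prov_eq R.T a b \<Longrightarrow> interp_eq a b"
proof (induction rule: prov_eq.induct)
  case (ax a b) then show ?case by (rule interp_eq_axiom)
next
  case (refl a t) then show ?case by (rule interp_eq_refl)
next
  case (sym a b) then show ?case by (rule interp_eq_sym)
next
  case (trans a b w) then show ?case using interp_eq_trans by blast
next
  case (post s u s' v t f)
  moreover have "s' = s" using R.prov_eq_T_paths[OF post(1)] by simp
  moreover have "is_path R.T (s,v) t" using R.prov_eq_T_tgt[OF post(1,2)] by simp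
  ultimately show ?case using interp_eq_snoc by blast
next
  case (pre s u s' v g)
  moreover have "s' = s" using R.prov_eq_T_paths[OF pre(1)] by simp
  moreover obtain t where "is_path R.T (s,u) t" "is_path R.T (s,v) t"
    using R.prov_eq_T_paths[OF pre(1)] by auto
  ultimately show ?case using interp_eq_cons by blast
qed

subsection \<open>Curryability of R and the isomorphism\<close>

definition repr_path where
  "repr_path c e z = tensor c (P.repr c (fst z) (fst (snd z))) (Q.repr (fst z) e (snd (snd z)))"

lemma repr_path_cross:
  assumes "z \<in> car c e"
  shows "rcp C E R c (repr_path c e z) \<and> cross_path C E R c e (repr_path c e z)"
proof -
  obtain d a b where z: "z = (d,a,b)" "a \<in> el PP c d" "b \<in> el QQ d e"
    using assms by (auto simp: comp_carrier_def)
  show ?thesis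
    using tensor_cross[OF conjunct1[OF P.repr_cross[OF z(2)]] conjunct1[OF Q.repr_cross[OF z(3)]]] z(1)
    by (simp add: repr_path_def)
qed

lemma comp_class_repr_path:
  assumes "z \<in> car c e"
  shows "comp_class c e (repr_path c e z) = crel c e `` {z}"
proof -
  obtain d a b where z: "z = (d,a,b)" "a \<in> el PP c d" "b \<in> el QQ d e"
    using assms by (auto simp: comp_carrier_def)
  show ?thesis
    using comp_class_tensor[OF conjunct1[OF P.repr_cross[OF z(2)]] conjunct1[OF Q.repr_cross[OF z(3)]]]
      z P.elem_repr[OF z(2)] Q.elem_repr[OF z(3)]
    by (simp add: repr_path_def)
qed

text \<open>The generating relation of the coend holds in the instance presentations of R; this
  is where conservativity of P and Q is used.\<close>
lemma repr_path_gen: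
  assumes "(x,y) \<in> cgen c e"
  shows "inst_eq C E R c (repr_path c e x) (repr_path c e y)"
proof -
  obtain d d' g a b where xy: "x = (d, a, act QQ (d,g) (e,[]) b)" "y = (d', act PP (c,[]) (d,g) a, b)"
    and g: "is_chain D d g d'" and a: "a \<in> el PP c d" and b: "b \<in> el QQ d' e"
    using assms by (auto simp: comp_gen_def)
  have pg: "is_path D (d,g) d'" using g by (simp add: is_path_def)
  have pe: "is_path E (e,[]) e" and pc: "is_path C (c,[]) c"
    using profunctor_el_sorts[OF Q.prof b] profunctor_el_sorts[OF P.prof a] by (simp_all add: is_path_def)
  let ?sa = "P.repr c d a" and ?tb = "Q.repr d' e b"
  let ?b' = "act QQ (d,g) (e,[]) b" and ?a' = "act PP (c,[]) (d,g) a"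
  have sa: "cross_path C D P c d ?sa" using P.repr_cross[OF a] by blast
  have tb: "cross_path D E Q d' e ?tb" using Q.repr_cross[OF b] by blast
  have gtb: "cross_path D E Q d e (whisker (d,g) ?tb (e,[]))"
    using Q.cross_path_whisker[OF pg pe] tb by simp
  have sag: "cross_path C D P c d' (append_right ?sa g)"
    using P.cross_path_whisker[OF pc pg] sa by (simp add: whisker_def append_right_def cross_path_def)
  have "inst_eq C E R c (repr_path c e x) (tensor c ?sa (whisker (d,g) ?tb (e,[])))"
  proof -
    have "Q.elem d e (whisker (d,g) ?tb (e,[])) = ?b'"
      using Q.elem_whisker[OF pg pe] tb Q.elem_repr[OF b] by simp
    then have "prov_eq Q.T (Q.repr d e ?b') (whisker (d,g) ?tb (e,[]))" using Q.repr_elem[OF gtb] by simp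
    moreover have "cross_path D E Q d e (Q.repr d e ?b')"
      using Q.repr_cross profunctor_act_el[OF Q.prof pg pe] b by simp
    ultimately show ?thesis using tensor_cong_right[OF sa _ gtb] xy(1) by (simp add: repr_path_def)
  qed
  also have "inst_eq C E R c (tensor c ?sa (whisker (d,g) ?tb (e,[]))) (tensor c (append_right ?sa g) ?tb)"
    using tensor_shift[OF sa g tb] by (simp add: whisker_def inst_eq.sym)
  also have "inst_eq C E R c (tensor c (append_right ?sa g) ?tb) (repr_path c e y)"
  proof -
    have "P.elem c d' (append_right ?sa g) = ?a'"
      using P.elem_whisker[OF pc pg] sa P.elem_repr[OF a]
      by (simp add: whisker_def append_right_def cross_path_def)
    then have "prov_eq P.T (P.repr c d' ?a') (append_right ?sa g)" using P.repr_elem[OF sag] by simp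
    moreover have "cross_path C D P c d' (P.repr c d' ?a')"
      using P.repr_cross profunctor_act_el[OF P.prof pc pg] a by simp
    ultimately show ?thesis
      using tensor_cong_left[OF _ sag _ tb] xy(2) by (simp add: repr_path_def inst_eq.sym)
  qed
  finally show ?thesis .
qed

lemma repr_path_crel:
  assumes "(z,z') \<in> crel c e" "z \<in> car c e"
  shows "inst_eq C E R c (repr_path c e z) (repr_path c e z')"
  using assms(1) unfolding comp_rel_def
proof (induction rule: rtrancl_induct)
  case base then show ?case using repr_path_cross[OF assms(2)] by (blast intro: inst_eq.refl)
next
  case (step y y')
  then consider "y = y'" | "(y,y') \<in> cgen c e" | "(y',y) \<in> cgen c e" by auto
  then show ?case using step.IH repr_path_gen by cases (blast intro: inst_eq.trans inst_eq.sym)+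
qed

lemma repr_path_triple_of:
  assumes t: "rcp C E R c t" "is_path R.T t (Inr e)"
  shows "inst_eq C E R c (repr_path c e (triple_of c e t)) t"
proof -
  obtain i h e0 where ti: "t = (Inl c, Inr (Inl i) # map (Inr \<circ> Inr) h)" "i \<in> PFuns R"
    "psrc R i = c" "is_chain E (ptgt R i) h e0"
    using t(1) by (auto simp: rcp_def)
  obtain p q where pq: "pairs ! i = (p,q)" by fastforce
  have i: "i < length pairs" using ti(2) by simp
  have S: "p \<in> PFuns P" "q \<in> PFuns Q" "ptgt P p = psrc Q q"
    using composable_nth[OF i] pq by (auto simp: composable_def)
  have h: "is_chain E (ptgt Q q) h e" using t(2) ti pq R.rcp_path_iff[OF t(1)] by simp
  have cp: "psrc P p = c" using ti(3) pq by simp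
  let ?d = "ptgt P p"
  let ?sp = "(Inl c, [Inr (Inl p)]) :: ('sc+'sd,'fc+'fp+'fd) path"
  let ?tq = "(Inl ?d, Inr (Inl q) # map (Inr \<circ> Inr) h) :: ('sd+'se,'fd+'fq+'fe) path"
  have sp: "cross_path C D P c ?d ?sp" using cross_path_P_sym[of c "[]" p] S cp P.psrc_sort by auto
  have tq: "cross_path D E Q ?d e ?tq" using cross_path_Q_sym[OF h S(2)] S(3) by simp
  note a = P.elem_in[OF sp] and b = Q.elem_in[OF tq]
  have "triple_of c e t = (?d, P.elem c ?d ?sp, Q.elem ?d e ?tq)"
    using triple_of_simp[OF pq, of c e "Inl c" "[]" h] ti(1) by simp
  then have "inst_eq C E R c (repr_path c e (triple_of c e t))
      (tensor c ?sp (Q.repr ?d e (Q.elem ?d e ?tq)))"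
    using tensor_cong_left[OF conjunct1[OF P.repr_cross[OF conjunct1[OF a]]] sp P.repr_elem[OF sp]
        conjunct1[OF Q.repr_cross[OF conjunct1[OF b]]]]
    by (simp add: repr_path_def)
  also have "inst_eq C E R c (tensor c ?sp (Q.repr ?d e (Q.elem ?d e ?tq))) (tensor c ?sp ?tq)"
    using tensor_cong_right[OF sp conjunct1[OF Q.repr_cross[OF conjunct1[OF b]]] tq Q.repr_elem[OF tq]] .
  also have "inst_eq C E R c (tensor c ?sp ?tq) (tensor_rcp ?sp ?tq)"
  proof -
    have "rcp C D P c (Inl c, Inr (Inl p) # map (Inr \<circ> Inr) [])"
      by (rule rcpI[where d="?d"]) (use S cp P.ptgt_sort Q.psrc_sort in auto)
    then show ?thesis using tensor_eq_tensor_rcp[OF _ sp tq] by simp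
  qed
  also have "inst_eq C E R c (tensor_rcp ?sp ?tq) t"
  proof -
    have "rcp D E Q ?d ?tq" by (rule rcpI[where d=e]) (use S h in auto)
    moreover have "pair_path p ?tq = t" using ti(1) pq pair_index_nth[OF i] cp by (simp add: pair_path_def)
    ultimately show ?thesis using tensor_rcp_generator[OF S(1) _ tq] cp by simp
  qed
  finally show ?thesis .
qed

lemma comp_class_inj:
  assumes t: "rcp C E R c t" "is_path R.T t (Inr e)" and t': "rcp C E R c t'" "is_path R.T t' (Inr e)"
    and eq: "comp_class c e t = comp_class c e t'"
  shows "inst_eq C E R c t t'"
proof -
  have ct: "cross_path C E R c e t" using t R.rcp_cross by blast
  have "(triple_of c e t, triple_of c e t') \<in> crel c e" using eq crel_class_eqD
    by (simp add: comp_class_def)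
  from repr_path_crel[OF this triple_of_car[OF ct]]
  have "inst_eq C E R c (repr_path c e (triple_of c e t)) (repr_path c e (triple_of c e t'))" .
  then show ?thesis using repr_path_triple_of[OF t] repr_path_triple_of[OF t']
    by (meson inst_eq.sym inst_eq.trans)
qed

lemma eqs_nongenI:
  "f \<in> Funs C \<Longrightarrow> i < length pairs \<Longrightarrow> ftgt C f = psrc P (fst (pairs ! i)) \<Longrightarrow>
    ((Inl (fsrc C f), [Inl f, Inr (Inl i)]),
     tensor_rcp (P.rcp_of (fsrc C f) (Inl (fsrc C f), [Inl f, Inr (Inl (fst (pairs ! i)))]))
       (sym_path (snd (pairs ! i)))) \<in> eqs_nongen"
  unfolding eqs_nongen_def by (rule image_eqI[where x="(f,i)"]) auto

lemma nongenerative_R: "nongenerative C E R"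
  unfolding nongenerative_def
proof (intro ballI impI)
  fix f i assume f: "f \<in> Funs C" and i: "i \<in> PFuns R" and ft: "ftgt C f = psrc R i"
  obtain p q where pq: "pairs ! i = (p,q)" by fastforce
  have il: "i < length pairs" using i by simp
  have S: "p \<in> PFuns P" "q \<in> PFuns Q" "ptgt P p = psrc Q q"
    using composable_nth[OF il] pq by (auto simp: composable_def)
  have fs: "fsrc C f \<in> Sorts C" "ftgt C f \<in> Sorts C" using P.wfC f by (auto simp: catpres_wf_def)
  let ?c = "fsrc C f"
  let ?s = "(Inl ?c, [Inl f, Inr (Inl p)]) :: ('sc+'sd,'fc+'fp+'fd) path"
  have s: "cross_path C D P ?c (ptgt P p) ?s" using cross_path_P_sym[of ?c "[f]" p] f ft pq S fs by simp
  have qc: "cross_path D E Q (ptgt P p) (ptgt Q q) (sym_path q)"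
    using cross_path_sym_path[OF S(2)] S(3) by simp
  let ?t = "tensor_rcp (P.rcp_of ?c ?s) (sym_path q)"
  have "rcp C E R ?c ?t" using tensor_cross[OF s qc] by (simp add: tensor_def)
  moreover have "prov_eq R.T (Inl ?c, [Inl f, Inr (Inl i)]) ?t"
  proof (rule prov_eq.ax)
    have "((Inl ?c, [Inl f, Inr (Inl i)]), ?t) \<in> eqs_nongen"
      using eqs_nongenI[OF f il] ft pq by simp
    then show "((Inl ?c, [Inl f, Inr (Inl i)]), ?t) \<in> Eqs R.T"
      unfolding total_def catpres.select_convs R_simps by blast
  qed
  ultimately show "\<exists>t. rcp C E R ?c t \<and> prov_eq R.T (Inl ?c, [Inl f, Inr (Inl i)]) t" by blast
qed

lemma cross_path_R_rcp:
  assumes "cross_path C E R c e s"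
  shows "\<exists>r. rcp C E R c r \<and> prov_eq R.T s r"
proof -
  obtain x i h where "s = (Inl c, map Inl x @ Inr (Inl i) # map (Inr \<circ> Inr) h)"
    "is_chain C c x (psrc R i)" "i \<in> PFuns R" "is_chain E (ptgt R i) h e"
    using assms by (cases s) (auto simp: cross_path_def is_path_def chain_total_X)
  then show ?thesis using R.nongenerative_rcp[OF nongenerative_R] by auto
qed

lemma conservative_R: "conservative C E R"
  unfolding conservative_def
proof (intro allI impI)
  fix c t t' assume a: "rcp C E R c t \<and> rcp C E R c t' \<and> prov_eq R.T t t'"
  then obtain e where e: "is_path R.T t (Inr e)" "fst t = Inl c" using R.rcp_is_path by blast
  have e': "is_path R.T t' (Inr e)" using R.prov_eq_T_tgt a e by blast
  have "comp_class c e t = comp_class c e t'" using prov_eq_interp_eq a e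
    unfolding interp_eq_def by blast
  then show "inst_eq C E R c t t'" using comp_class_inj a e e' by blast
qed

lemma curryable_R: "curryable C E R"
  using nongenerative_R conservative_R by (simp add: curryable_def)

lemma el_prof_comp_some:
  assumes "X \<in> el (prof_comp C D E PP QQ) c e"
  shows "(SOME z. z \<in> X) \<in> car c e \<and> X = crel c e `` {SOME z. z \<in> X}"
proof -
  obtain z0 where z0: "z0 \<in> car c e" "X = crel c e `` {z0}" using assms el_prof_comp by auto
  have "z0 \<in> X" using z0 crel_refl by auto
  then have "(SOME z. z \<in> X) \<in> X" by (rule someI)
  then have r: "(z0, SOME z. z \<in> X) \<in> crel c e" using z0 by auto
  show ?thesis using crel_car[OF r z0(1)] HOL.trans[OF z0(2) crel_class[OF r]] by blast
qed

lemma prov_eq_iff_comp_class: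
  assumes a: "cross_path C E R c e a" and b: "cross_path C E R c e b"
  shows "prov_eq R.T a b \<longleftrightarrow> comp_class c e a = comp_class c e b"
proof
  show "prov_eq R.T a b \<Longrightarrow> comp_class c e a = comp_class c e b"
    using prov_eq_interp_eq a unfolding interp_eq_def cross_path_def by blast
next
  assume eq: "comp_class c e a = comp_class c e b"
  obtain a0 where a0: "rcp C E R c a0" "prov_eq R.T a a0" using cross_path_R_rcp[OF a] by blast
  obtain b0 where b0: "rcp C E R c b0" "prov_eq R.T b b0" using cross_path_R_rcp[OF b] by blast
  have pa: "is_path R.T a0 (Inr e)" and pb: "is_path R.T b0 (Inr e)"
    using R.prov_eq_T_tgt a0 b0 a b by (auto simp: cross_path_def)
  have "comp_class c e a0 = comp_class c e b0"
    using prov_eq_interp_eq[OF a0(2)] prov_eq_interp_eq[OF b0(2)] a b eq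
    unfolding interp_eq_def cross_path_def by auto
  from comp_class_inj[OF a0(1) pa b0(1) pb this] have "prov_eq R.T a0 b0"
    by (rule R.inst_eq_prov_eq)
  then show "prov_eq R.T a b" using a0 b0 by (meson prov_eq.sym prov_eq.trans)
qed

definition comp_iso where "comp_iso c e X = R.prov_class (repr_path c e (SOME z. z \<in> X))"

lemma repr_path_some:
  assumes "X \<in> el (prof_comp C D E PP QQ) c e"
  shows "cross_path C E R c e (repr_path c e (SOME z. z \<in> X))"
    and "comp_class c e (repr_path c e (SOME z. z \<in> X)) = X"
  using el_prof_comp_some[OF assms] repr_path_cross comp_class_repr_path by auto

lemma comp_iso_el:
  "X \<in> el (prof_comp C D E PP QQ) c e \<Longrightarrow> comp_iso c e X \<in> el (pres_prof C E R) c e"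
  using repr_path_some(1) R.el_pres_prof by (auto simp: comp_iso_def)

lemma inj_on_comp_iso: "inj_on (comp_iso c e) (el (prof_comp C D E PP QQ) c e)"
proof (rule inj_onI)
  fix X Y assume X: "X \<in> el (prof_comp C D E PP QQ) c e" and Y: "Y \<in> el (prof_comp C D E PP QQ) c e"
    and "comp_iso c e X = comp_iso c e Y"
  then have "prov_eq R.T (repr_path c e (SOME z. z \<in> X)) (repr_path c e (SOME z. z \<in> Y))"
    using R.prov_class_eqD repr_path_some(1)[OF X] by (simp add: comp_iso_def)
  then show "X = Y"
    using prov_eq_iff_comp_class[OF repr_path_some(1)[OF X] repr_path_some(1)[OF Y]]
      repr_path_some(2)[OF X] repr_path_some(2)[OF Y] by simp
qed

lemma el_pres_R_subset_comp_iso: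
  "el (pres_prof C E R) c e \<subseteq> comp_iso c e ` el (prof_comp C D E PP QQ) c e"
proof
  fix Y assume "Y \<in> el (pres_prof C E R) c e"
  then obtain t where t: "cross_path C E R c e t" "Y = R.prov_class t" using R.el_pres_prof by auto
  let ?X = "comp_class c e t"
  have X: "?X \<in> el (prof_comp C D E PP QQ) c e"
    using el_prof_comp triple_of_car[OF t(1)] by (auto simp: comp_class_def)
  have "prov_eq R.T (repr_path c e (SOME z. z \<in> ?X)) t"
    using prov_eq_iff_comp_class[OF repr_path_some(1)[OF X] t(1)] repr_path_some(2)[OF X] by simp
  then have "comp_iso c e ?X = Y" using t(2) R.prov_class_eq by (simp add: comp_iso_def)
  with X show "Y \<in> comp_iso c e ` el (prof_comp C D E PP QQ) c e" by blast
qed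

lemma comp_iso_act:
  assumes u: "is_path C u c" and v: "is_path E v e'"
    and X: "X \<in> el (prof_comp C D E PP QQ) c (fst v)"
  shows "comp_iso (fst u) e' (act (prof_comp C D E PP QQ) u v X)
    = act (pres_prof C E R) u v (comp_iso c (fst v) X)"
proof -
  let ?t = "repr_path c (fst v) (SOME z. z \<in> X)"
  let ?X' = "act (prof_comp C D E PP QQ) u v X"
  note t = repr_path_some[OF X]
  obtain z where z: "z \<in> car c (fst v)" "X = crel c (fst v) `` {z}"
    using X el_prof_comp by auto
  have "?X' = crel (fst u) e' `` {act_triple u v z}"
    using act_prof_comp[OF z(1) u v HOL.refl] z(2) by simp
  then have "?X' \<in> el (prof_comp C D E PP QQ) (fst u) e'"
    using act_triple_car[OF z(1) u v HOL.refl] el_prof_comp by auto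
  note t' = repr_path_some[OF this]
  have "comp_class (fst u) e' (whisker u ?t v) = ?X'"
    using comp_class_whisker[OF t(1) u v HOL.refl] t(2) by simp
  then have "prov_eq R.T (repr_path (fst u) e' (SOME z. z \<in> ?X')) (whisker u ?t v)"
    using prov_eq_iff_comp_class[OF t'(1) R.cross_path_whisker[OF u v t(1)]] t'(2) by simp
  then have "comp_iso (fst u) e' ?X' = R.prov_class (whisker u ?t v)"
    using R.prov_class_eq by (simp add: comp_iso_def)
  also have "\<dots> = act (pres_prof C E R) u v (comp_iso c (fst v) X)"
    using R.act_pres_prof[OF u v t(1)] by (simp add: comp_iso_def)
  finally show ?thesis .
qed

lemma prof_iso_comp_R: "prof_iso C E (prof_comp C D E PP QQ) (pres_prof C E R)"
proof -
  have "bij_betw (comp_iso c e) (el (prof_comp C D E PP QQ) c e) (el (pres_prof C E R) c e)" for c e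
    using inj_on_comp_iso comp_iso_el el_pres_R_subset_comp_iso[of c e]
    by (auto simp: bij_betw_def)
  then show ?thesis unfolding prof_iso_def using comp_iso_act by blast
qed

end

theorem mainTheorem16:
  fixes C :: "('sc,'fc) catpres" and D :: "('sd,'fd) catpres" and E :: "('se,'fe) catpres"
    and P :: "('sc,'fc,'sd,'fd,'fp) profpres" and Q :: "('sd,'fd,'se,'fe,'fq) profpres"
    and PP :: "('sc,'fc,'sd,'fd,'a) profunctor" and QQ :: "('sd,'fd,'se,'fe,'b) profunctor"
  assumes "catpres_wf C" "catpres_wf D" "catpres_wf E"
    and "finite_catpres C" "finite_catpres D" "finite_catpres E"
    and "profpres_wf C D P" "finite_profpres P" "curryable C D P"
    and "profpres_wf D E Q" "finite_profpres Q" "curryable D E Q"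
    and "is_profunctor C D PP" "is_profunctor D E QQ"
    and "prof_iso C D PP (pres_prof C D P)" "prof_iso D E QQ (pres_prof D E Q)"
  shows "\<exists>R :: ('sc,'fc,'se,'fe,nat) profpres.
           profpres_wf C E R \<and> finite_profpres R \<and> curryable C E R \<and>
           prof_iso C E (prof_comp C D E PP QQ) (pres_prof C E R)"
proof -
  obtain phiP where "presentation C D P PP phiP"
    using presentation_of_prof_iso assms(1,2,7,9,13,15) .
  moreover obtain phiQ where "presentation D E Q QQ phiQ"
    using presentation_of_prof_iso assms(2,3,10,12,14,16) .
  ultimately interpret composite C D E P Q PP QQ phiP phiQ
    using assms(4,8,11) by (simp add: composite_def composite_axioms_def)
  show ?thesis using wf_R finite_R curryable_R prof_iso_comp_R by blast
qed

end
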